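(* Let $\pi$ be a probability distribution on a finite set $\mathcal C$, $D\in\mathbb N$, $\alpha\in[0,1]$, and for $d=1,\dots,D$ let $K_{d,+1},K_{d,-1}$ be Markov kernels on $\mathcal C$ with \[ \pi(c)K_{d,+1}(c,c')=\pi(c')K_{d,-1}(c',c)\quad\text{for all }c\neq c',\ d=1,\dots,D. \] Let $K_d=(K_{d,+1}+K_{d,-1})/2$ and let $(p_c(d))_{d=1}^D$ be probability weights for each $c\in\mathcal C$ such that $p_c(d)=p_{c'}(d)$ whenever $K_d(c,c')>0$. Define $K_R(c,c')=\sum_{d=1}^Dp_c(d)K_d(c,c')$ on $\mathcal C$ and $K_{NR}((c,v),(c',v'))=\sum_{d=1}^Dp_c(d)(F_dK_{\mathrm{lift},d}F_d)((c,v),(c',v'))$ on $\mathcal C\times\{-1,+1\}^D$, with $F_d$, $K_{\mathrm{lift},d}$ as in the context. Then: (a) $K_R$ is $\pi$-reversible; (b) $K_{NR}$ is $\tilde\pi$-invariant, where $\tilde\pi(c,v)=\pi(c)2^{-D}$; (c) for every $\tilde g:\mathcal C\to\mathbb R$ and $g(c,v):=\tilde g(c)$, $\mathrm{Var}(g,K_{NR})\le\mathrm{Var}(\tilde g,K_R)$.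
   Context: $F_d((c,v),(c',v'))=\mathbb 1(c=c')\bigl[(1-\alpha)\mathbb 1(v=v')+\alpha\,\mathbb 1(v_{-d}=v'_{-d},\,v'_d=-v_d)\bigr]$, where $v_{-d}$ denotes $v$ without its $d$-th coordinate. $K_{\mathrm{lift},d}((c,v),(c',v'))=K_{d,v_d}(c,c')\,Q_{d,c,c'}(v,v')$ with $Q_{d,c,c'}(v,v')=\mathbb 1(v_{-d}=v'_{-d})\bigl[\mathbb 1(c\ne c')\mathbb 1(v_d=v'_d)+\mathbb 1(c=c')\mathbb 1(v_d=-v'_d)\bigr]$; products of kernels denote composition. Asymptotic variance: for a kernel $P$ with invariant distribution $\mu$ and chain $(X_t)$ with kernel $P$, $X_0\sim\mu$, $\mathrm{Var}(g,P)=\lim_{T\to\infty}T\,\mathrm{Var}(\frac1T\sum_{t=1}^Tg(X_t))=\mathrm{Var}_\mu(g)+2\sum_{t\ge1}\mathrm{Cov}(g(X_0),g(X_t))$, in $[0,\infty]$. *)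

theory Defs
  imports "HOL-Analysis.Analysis"
begin

definition kcomp :: "'s set \<Rightarrow> ('s \<Rightarrow> 's \<Rightarrow> real) \<Rightarrow> ('s \<Rightarrow> 's \<Rightarrow> real) \<Rightarrow> 's \<Rightarrow> 's \<Rightarrow> real" where
  "kcomp S P Q x z = (\<Sum>y\<in>S. P x y * Q y z)"

fun kpow :: "'s set \<Rightarrow> ('s \<Rightarrow> 's \<Rightarrow> real) \<Rightarrow> nat \<Rightarrow> 's \<Rightarrow> 's \<Rightarrow> real" where
  "kpow S P 0 = (\<lambda>x y. if x = y then 1 else 0)"
| "kpow S P (Suc n) = kcomp S (kpow S P n) P"

definition law_at :: "'s set \<Rightarrow> ('s \<Rightarrow> real) \<Rightarrow> ('s \<Rightarrow> 's \<Rightarrow> real) \<Rightarrow> nat \<Rightarrow> 's \<Rightarrow> real" where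
  "law_at S mu P t y = (\<Sum>x\<in>S. mu x * kpow S P t x y)"

definition mean_at :: "'s set \<Rightarrow> ('s \<Rightarrow> real) \<Rightarrow> ('s \<Rightarrow> 's \<Rightarrow> real) \<Rightarrow> ('s \<Rightarrow> real) \<Rightarrow> nat \<Rightarrow> real" where
  "mean_at S mu P g t = (\<Sum>y\<in>S. law_at S mu P t y * g y)"

text \<open>E[g(X_s) g(X_t)] for s \<le> t (Markov property)\<close>
definition prod_mom0 :: "'s set \<Rightarrow> ('s \<Rightarrow> real) \<Rightarrow> ('s \<Rightarrow> 's \<Rightarrow> real) \<Rightarrow> ('s \<Rightarrow> real) \<Rightarrow> nat \<Rightarrow> nat \<Rightarrow> real" where
  "prod_mom0 S mu P g s t =
     (\<Sum>x\<in>S. \<Sum>y\<in>S. law_at S mu P s x * g x * kpow S P (t - s) x y * g y)"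

definition prod_mom :: "'s set \<Rightarrow> ('s \<Rightarrow> real) \<Rightarrow> ('s \<Rightarrow> 's \<Rightarrow> real) \<Rightarrow> ('s \<Rightarrow> real) \<Rightarrow> nat \<Rightarrow> nat \<Rightarrow> real" where
  "prod_mom S mu P g s t =
     (if s \<le> t then prod_mom0 S mu P g s t else prod_mom0 S mu P g t s)"

text \<open>Var((1/T) \<Sum>_{t=1}^T g(X_t))\<close>
definition var_avg :: "'s set \<Rightarrow> ('s \<Rightarrow> real) \<Rightarrow> ('s \<Rightarrow> 's \<Rightarrow> real) \<Rightarrow> ('s \<Rightarrow> real) \<Rightarrow> nat \<Rightarrow> real" where
  "var_avg S mu P g T =
     (1 / (real T)^2) * ((\<Sum>s\<in>{1..T}. \<Sum>t\<in>{1..T}. prod_mom S mu P g s t)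
                        - (\<Sum>t\<in>{1..T}. mean_at S mu P g t)^2)"

definition asym_var :: "'s set \<Rightarrow> ('s \<Rightarrow> real) \<Rightarrow> ('s \<Rightarrow> 's \<Rightarrow> real) \<Rightarrow> ('s \<Rightarrow> real) \<Rightarrow> ereal" where
  "asym_var S mu P g = lim (\<lambda>T. ereal (real T * var_avg S mu P g T))"

text \<open>Velocities in {-1,+1}^D, indexed by d = 1..D; coordinates outside 1..D are fixed to 1.\<close>
definition vels :: "nat \<Rightarrow> (nat \<Rightarrow> int) set" where
  "vels D = {v. (\<forall>d\<in>{1..D}. v d = 1 \<or> v d = -1) \<and> (\<forall>d. d \<notin> {1..D} \<longrightarrow> v d = 1)}"

definition Fd :: "real \<Rightarrow> nat \<Rightarrow> ('c \<times> (nat \<Rightarrow> int)) \<Rightarrow> ('c \<times> (nat \<Rightarrow> int)) \<Rightarrow> real" where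
  "Fd \<alpha> d x y = (case x of (c, v) \<Rightarrow> case y of (c', v') \<Rightarrow>
     (if c = c' then (1 - \<alpha>) * (if v = v' then 1 else 0)
        + \<alpha> * (if (\<forall>j. j \<noteq> d \<longrightarrow> v j = v' j) \<and> v' d = - v d then 1 else 0)
      else 0))"

definition Qd :: "nat \<Rightarrow> 'c \<Rightarrow> 'c \<Rightarrow> (nat \<Rightarrow> int) \<Rightarrow> (nat \<Rightarrow> int) \<Rightarrow> real" where
  "Qd d c c' v v' =
     (if \<forall>j. j \<noteq> d \<longrightarrow> v j = v' j then
        (if c \<noteq> c' \<and> v d = v' d then 1 else 0) + (if c = c' \<and> v d = - v' d then 1 else 0)
      else 0)"

definition Klift :: "(nat \<Rightarrow> int \<Rightarrow> 'c \<Rightarrow> 'c \<Rightarrow> real) \<Rightarrow> nat \<Rightarrow> ('c \<times> (nat \<Rightarrow> int)) \<Rightarrow> ('c \<times> (nat \<Rightarrow> int)) \<Rightarrow> real" where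
  "Klift K d x y = (case x of (c, v) \<Rightarrow> case y of (c', v') \<Rightarrow> K d (v d) c c' * Qd d c c' v v')"

definition Kavg :: "(nat \<Rightarrow> int \<Rightarrow> 'c \<Rightarrow> 'c \<Rightarrow> real) \<Rightarrow> nat \<Rightarrow> 'c \<Rightarrow> 'c \<Rightarrow> real" where
  "Kavg K d c c' = (K d 1 c c' + K d (-1) c c') / 2"

definition KR :: "nat \<Rightarrow> ('c \<Rightarrow> nat \<Rightarrow> real) \<Rightarrow> (nat \<Rightarrow> int \<Rightarrow> 'c \<Rightarrow> 'c \<Rightarrow> real) \<Rightarrow> 'c \<Rightarrow> 'c \<Rightarrow> real" where
  "KR D p K c c' = (\<Sum>d\<in>{1..D}. p c d * Kavg K d c c')"

definition KNR :: "nat \<Rightarrow> real \<Rightarrow> ('c \<Rightarrow> nat \<Rightarrow> real) \<Rightarrow> (nat \<Rightarrow> int \<Rightarrow> 'c::finite \<Rightarrow> 'c \<Rightarrow> real)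
     \<Rightarrow> ('c \<times> (nat \<Rightarrow> int)) \<Rightarrow> ('c \<times> (nat \<Rightarrow> int)) \<Rightarrow> real" where
  "KNR D \<alpha> p K x y =
     (\<Sum>d\<in>{1..D}. p (fst x) d *
        kcomp (UNIV \<times> vels D) (kcomp (UNIV \<times> vels D) (Fd \<alpha> d) (Klift K d)) (Fd \<alpha> d) x y)"

definition pitilde :: "nat \<Rightarrow> ('c \<Rightarrow> real) \<Rightarrow> ('c \<times> (nat \<Rightarrow> int)) \<Rightarrow> real" where
  "pitilde D \<pi> x = \<pi> (fst x) / 2 ^ D"

end

theory Submission
  imports Defs "HOL-Library.Function_Algebras"
begin

text \<open>
  Parts (a) and (b) are local computations. Skew balance of \<open>K d 1\<close> and \<open>K d (-1)\<close>, together
  with the constancy of \<open>p\<close> along transitions, makes \<open>K\<^sub>R\<close> reversible; it also makes each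
  \<open>F\<^sub>d K\<^sub>l\<^sub>i\<^sub>f\<^sub>t\<^sub>,\<^sub>d F\<^sub>d\<close>, and hence \<open>K\<^sub>N\<^sub>R\<close>, satisfy skew detailed balance with respect to
  \<open>\<pi>(c) 2\<^sup>-\<^sup>D\<close> and the reversal of all velocities, which with stochasticity yields invariance.

  For (c), the asymptotic variance of a stationary finite chain \<open>P\<close> is read off a Poisson
  decomposition \<open>g\<^sub>0 = h - P h + c\<close> of the centred observable \<open>g\<^sub>0\<close>, with \<open>P c = c\<close>: it is
  infinite unless \<open>\<langle>c, c\<rangle> = 0\<close>, and then equals \<open>2 \<langle>g\<^sub>0, h\<rangle> - \<langle>g\<^sub>0, g\<^sub>0\<rangle>\<close>. On functions of the
  position, \<open>K\<^sub>N\<^sub>R\<close> averaged over a velocity and its reversal acts as \<open>K\<^sub>R\<close>. Hence velocity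
  averages of \<open>K\<^sub>N\<^sub>R\<close>-harmonic functions are \<open>K\<^sub>R\<close>-harmonic, so the lifted chain has no
  harmonic part when the reversible one has none; and the Dirichlet form of \<open>K\<^sub>N\<^sub>R\<close> dominates
  that of \<open>K\<^sub>R\<close> on velocity averages. Since the Poisson solution of the reversible \<open>K\<^sub>R\<close>
  maximises \<open>2 \<langle>g\<^sub>0, a\<rangle>\<close> minus the Dirichlet form of \<open>a\<close>, the lifted value is at most the
  reversible one.
\<close>

section \<open>Linear algebra\<close>

context vector_space
begin

lemma inj_on_imp_surj_on_subspace:
  assumes L: "Vector_Spaces.linear scale scale L"
    and W: "finite W" "U \<subseteq> span W" and U: "subspace U" "L ` U \<subseteq> U"
    and inj: "inj_on L U"
  shows "L ` U = U"
proof -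
  interpret L: Vector_Spaces.linear scale scale L by fact
  obtain B where B: "B \<subseteq> U" "independent B" "U \<subseteq> span B"
    using maximal_independent_subset[of U] by blast
  have B_fin: "finite B"
    using independent_span_bound[OF W(1) B(2)] B(1) W(2) by auto
  have span_B: "span B = U"
    using B U(1) span_minimal[of B U] by auto
  have LB_indep: "independent (L ` B)"
    using L.independent_injective_image[OF B(2)] inj span_B by simp
  have card_LB: "card (L ` B) = card B"
    using card_image[of L B] inj B(1) inj_on_subset by blast
  have "u \<in> L ` U" if u: "u \<in> U" for u
  proof (rule ccontr)
    assume u_notin: "u \<notin> L ` U"
    have "u \<notin> span (L ` B)"
      using u_notin L.span_image[of B] span_B by simp
    hence indep: "independent (insert u (L ` B))"
      using independent_insertI LB_indep by blast
    have "insert u (L ` B) \<subseteq> span B"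
      using u U(2) B(1) span_B by auto
    hence "card (insert u (L ` B)) \<le> card B"
      using independent_span_bound[OF B_fin indep] by simp
    moreover have "u \<notin> L ` B" using u_notin B(1) by auto
    ultimately show False using card_LB B_fin by simp
  qed
  thus ?thesis using U(2) by blast
qed

lemma range_kernel_decomposition:
  assumes L: "Vector_Spaces.linear scale scale L"
    and W: "finite W" "V \<subseteq> span W" and V: "subspace V" "L ` V \<subseteq> V"
    and range_kernel: "\<And>v. v \<in> V \<Longrightarrow> L (L v) = 0 \<Longrightarrow> L v = 0"
    and v: "v \<in> V"
  obtains w where "w \<in> V" "L (v - L w) = 0"
proof -
  interpret L: Vector_Spaces.linear scale scale L by fact
  have U: "subspace (L ` V)" "L ` L ` V \<subseteq> L ` V"
    using L.subspace_image[OF V(1)] V(2) by auto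
  have "inj_on L (L ` V)"
    using range_kernel by (subst L.inj_on_iff_eq_0[OF U(1)]) auto
  hence "L ` L ` V = L ` V"
    using inj_on_imp_surj_on_subspace[OF L W(1) _ U] W(2) V(2) by blast
  then obtain w where "w \<in> V" "L v = L (L w)"
    using v by blast
  thus ?thesis using that by (simp add: L.diff)
qed

end

definition scale_fun :: "real \<Rightarrow> ('a \<Rightarrow> real) \<Rightarrow> 'a \<Rightarrow> real" where
  "scale_fun r f = (\<lambda>x. r * f x)"

interpretation real_fun: vector_space "scale_fun :: real \<Rightarrow> ('a \<Rightarrow> real) \<Rightarrow> 'a \<Rightarrow> real"
  by unfold_locales (auto simp: scale_fun_def algebra_simps fun_eq_iff)

lemma supported_in_span_indicators:
  assumes "finite S"
  shows "{f. \<forall>x. x \<notin> S \<longrightarrow> f x = 0} \<subseteq> real_fun.span ((\<lambda>y x. if x = y then 1 else 0) ` S)"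
proof
  fix f :: "'a \<Rightarrow> real" assume f: "f \<in> {f. \<forall>x. x \<notin> S \<longrightarrow> f x = 0}"
  have "f = (\<Sum>y\<in>S. scale_fun (f y) (\<lambda>x. if x = y then 1 else 0))"
  proof
    fix x
    have "(\<Sum>y\<in>S. scale_fun (f y) (\<lambda>x. if x = y then 1 else 0)) x
        = (\<Sum>y\<in>S. if y = x then f x else 0)"
      by (induction S rule: infinite_finite_induct) (auto simp: scale_fun_def)
    then show "f x = (\<Sum>y\<in>S. scale_fun (f y) (\<lambda>x. if x = y then 1 else 0)) x"
      using f assms by simp
  qed
  also have "\<dots> \<in> real_fun.span ((\<lambda>y x. if x = y then 1 else 0) ` S)"
    by (intro real_fun.span_sum real_fun.span_scale real_fun.span_base) auto
  finally show "f \<in> real_fun.span ((\<lambda>y x. if x = y then 1 else 0) ` S)" .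
qed

definition kapply :: "'s set \<Rightarrow> ('s \<Rightarrow> 's \<Rightarrow> real) \<Rightarrow> ('s \<Rightarrow> real) \<Rightarrow> 's \<Rightarrow> real" where
  "kapply S P f x = (\<Sum>y\<in>S. P x y * f y)"

lemma kapply_cong: "(\<And>y. y \<in> S \<Longrightarrow> f y = g y) \<Longrightarrow> kapply S P f x = kapply S P g x"
  by (simp add: kapply_def)

lemma kapply_add: "kapply S P (\<lambda>y. f y + g y) x = kapply S P f x + kapply S P g x"
  by (simp add: kapply_def sum.distrib algebra_simps)

lemma kapply_diff: "kapply S P (\<lambda>y. f y - g y) x = kapply S P f x - kapply S P g x"
  by (simp add: kapply_def sum_subtractf algebra_simps)

lemma kapply_cmult: "kapply S P (\<lambda>y. a * f y) x = a * kapply S P f x"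
  by (simp add: kapply_def sum_distrib_left algebra_simps)

lemma kapply_kcomp: "kapply S (kcomp S Q R) f x = kapply S Q (kapply S R f) x"
proof -
  have "kapply S (kcomp S Q R) f x = (\<Sum>y\<in>S. \<Sum>z\<in>S. Q x z * R z y * f y)"
    by (simp add: kapply_def kcomp_def sum_distrib_right)
  also have "\<dots> = (\<Sum>z\<in>S. \<Sum>y\<in>S. Q x z * R z y * f y)"
    by (rule sum.swap)
  also have "\<dots> = kapply S Q (kapply S R f) x"
    by (simp add: kapply_def sum_distrib_left mult.assoc)
  finally show ?thesis .
qed

lemma kapply_mixture:
  "kapply S (\<lambda>x y. \<Sum>d\<in>I. w x d * Q d x y) f x = (\<Sum>d\<in>I. w x d * kapply S (Q d) f x)"
proof -
  have "kapply S (\<lambda>x y. \<Sum>d\<in>I. w x d * Q d x y) f x = (\<Sum>y\<in>S. \<Sum>d\<in>I. w x d * Q d x y * f y)"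
    by (simp add: kapply_def sum_distrib_right)
  also have "\<dots> = (\<Sum>d\<in>I. w x d * kapply S (Q d) f x)"
    by (subst sum.swap) (simp add: kapply_def sum_distrib_left mult.assoc)
  finally show ?thesis .
qed

lemma kcomp_assoc: "kcomp S (kcomp S Q R) T x y = kcomp S Q (kcomp S R T) x y"
  using kapply_kcomp[of S Q R "\<lambda>z. T z y" x] by (simp add: kapply_def kcomp_def)

lemma kapply_kpow_0: "finite S \<Longrightarrow> x \<in> S \<Longrightarrow> kapply S (kpow S P 0) f x = f x"
proof -
  assume "finite S" "x \<in> S"
  have "kapply S (kpow S P 0) f x = (\<Sum>y\<in>S. if x = y then f y else 0)"
    unfolding kapply_def by (intro sum.cong) auto
  thus ?thesis using \<open>finite S\<close> \<open>x \<in> S\<close> by simp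
qed

lemma kapply_kpow_Suc: "kapply S (kpow S P (Suc n)) f x = kapply S (kpow S P n) (kapply S P f) x"
  by (simp add: kapply_kcomp)

declare kpow.simps [simp del]

lemma kcomp_nonneg:
  "(\<And>x y. x \<in> S \<Longrightarrow> y \<in> S \<Longrightarrow> Q x y \<ge> 0) \<Longrightarrow> (\<And>x y. x \<in> S \<Longrightarrow> y \<in> S \<Longrightarrow> R x y \<ge> 0)
   \<Longrightarrow> x \<in> S \<Longrightarrow> y \<in> S \<Longrightarrow> kcomp S Q R x y \<ge> 0"
  unfolding kcomp_def by (intro sum_nonneg) auto

lemma kcomp_row_sum:
  assumes "(\<Sum>y\<in>S. Q x y) = 1" and "\<And>y. y \<in> S \<Longrightarrow> (\<Sum>z\<in>S. R y z) = 1"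
  shows "(\<Sum>z\<in>S. kcomp S Q R x z) = 1"
  using kapply_kcomp[of S Q R "\<lambda>_. 1" x] assms by (simp add: kapply_def kcomp_def)

lemma kcomp_skew_balance:
  assumes \<iota>: "\<And>x. x \<in> S \<Longrightarrow> \<iota> x \<in> S" "\<And>x. x \<in> S \<Longrightarrow> \<iota> (\<iota> x) = x"
    and m: "\<And>x. x \<in> S \<Longrightarrow> m (\<iota> x) = m x"
    and Q: "\<And>x y. x \<in> S \<Longrightarrow> y \<in> S \<Longrightarrow> m x * Q x y = m (\<iota> y) * Q' (\<iota> y) (\<iota> x)"
    and R: "\<And>x y. x \<in> S \<Longrightarrow> y \<in> S \<Longrightarrow> m x * R x y = m (\<iota> y) * R' (\<iota> y) (\<iota> x)"
    and x: "x \<in> S" and y: "y \<in> S"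
  shows "m x * kcomp S Q R x y = m (\<iota> y) * kcomp S R' Q' (\<iota> y) (\<iota> x)"
proof -
  have "m x * kcomp S Q R x y = (\<Sum>z\<in>S. (m x * Q x z) * R z y)"
    by (simp add: kcomp_def sum_distrib_left mult.assoc)
  also have "\<dots> = (\<Sum>z\<in>S. (m z * R z y) * Q' (\<iota> z) (\<iota> x))"
    by (rule sum.cong) (auto simp: Q[OF x] m \<iota>)
  also have "\<dots> = (\<Sum>z\<in>S. m (\<iota> y) * R' (\<iota> y) (\<iota> z) * Q' (\<iota> z) (\<iota> x))"
    by (rule sum.cong) (auto simp: R[OF _ y])
  also have "\<dots> = (\<Sum>z\<in>S. m (\<iota> y) * R' (\<iota> y) z * Q' z (\<iota> x))"
    by (rule sum.reindex_bij_witness[where i=\<iota> and j=\<iota>]) (auto simp: \<iota>)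
  also have "\<dots> = m (\<iota> y) * kcomp S R' Q' (\<iota> y) (\<iota> x)"
    by (simp add: kcomp_def sum_distrib_left mult.assoc)
  finally show ?thesis .
qed

lemma skew_balance_stationary:
  fixes m :: "'s \<Rightarrow> real"
  assumes \<iota>: "\<And>x. x \<in> S \<Longrightarrow> \<iota> x \<in> S" "\<And>x. x \<in> S \<Longrightarrow> \<iota> (\<iota> x) = x"
    and m: "\<And>x. x \<in> S \<Longrightarrow> m (\<iota> x) = m x"
    and balance: "\<And>x y. x \<in> S \<Longrightarrow> y \<in> S \<Longrightarrow> m x * Q x y = m (\<iota> y) * Q' (\<iota> y) (\<iota> x)"
    and row_sum: "\<And>x. x \<in> S \<Longrightarrow> (\<Sum>y\<in>S. Q' x y) = 1"
    and y: "y \<in> S"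
  shows "(\<Sum>x\<in>S. m x * Q x y) = m y"
proof -
  have "(\<Sum>x\<in>S. m x * Q x y) = (\<Sum>x\<in>S. m (\<iota> y) * Q' (\<iota> y) (\<iota> x))"
    by (intro sum.cong) (auto simp: balance y)
  also have "\<dots> = m (\<iota> y) * (\<Sum>x\<in>S. Q' (\<iota> y) (\<iota> x))"
    by (simp add: sum_distrib_left)
  also have "(\<Sum>x\<in>S. Q' (\<iota> y) (\<iota> x)) = (\<Sum>z\<in>S. Q' (\<iota> y) z)"
    by (rule sum.reindex_bij_witness[where i=\<iota> and j=\<iota>]) (auto simp: \<iota>)
  finally show ?thesis
    using row_sum[OF \<iota>(1)[OF y]] m[OF y] by simp
qed

locale stochastic_kernel =
  fixes S :: "'s set" and P :: "'s \<Rightarrow> 's \<Rightarrow> real"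
  assumes finite_S: "finite S"
    and kernel_nonneg: "\<And>x y. x \<in> S \<Longrightarrow> y \<in> S \<Longrightarrow> P x y \<ge> 0"
    and kernel_row_sum: "\<And>x. x \<in> S \<Longrightarrow> (\<Sum>y\<in>S. P x y) = 1"
begin

lemma kapply_const: "x \<in> S \<Longrightarrow> kapply S P (\<lambda>_. k) x = k"
  using kernel_row_sum by (simp add: kapply_def sum_distrib_right[symmetric])

lemma kapply_abs_le:
  assumes f: "\<And>y. y \<in> S \<Longrightarrow> \<bar>f y\<bar> \<le> M" and x: "x \<in> S"
  shows "\<bar>kapply S P f x\<bar> \<le> M"
proof -
  have "\<bar>kapply S P f x\<bar> \<le> (\<Sum>y\<in>S. P x y * \<bar>f y\<bar>)"
    unfolding kapply_def using sum_abs[of "\<lambda>y. P x y * f y" S] kernel_nonneg[OF x]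
    by (simp add: abs_mult)
  also have "\<dots> \<le> (\<Sum>y\<in>S. P x y * M)"
    by (intro sum_mono mult_left_mono) (auto simp: f kernel_nonneg x)
  also have "\<dots> = M"
    using kernel_row_sum[OF x] by (simp add: sum_distrib_right[symmetric])
  finally show ?thesis .
qed

lemma kpow_apply_abs_le:
  "(\<And>y. y \<in> S \<Longrightarrow> \<bar>f y\<bar> \<le> M) \<Longrightarrow> x \<in> S \<Longrightarrow> \<bar>kapply S (kpow S P n) f x\<bar> \<le> M"
proof (induction n arbitrary: f x)
  case 0
  then show ?case by (simp add: kapply_kpow_0 finite_S)
next
  case (Suc n)
  then show ?case by (simp add: kapply_kpow_Suc kapply_abs_le)
qed

lemma kpow_apply_harmonic:
  assumes "\<And>y. y \<in> S \<Longrightarrow> kapply S P c y = c y"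
  shows "x \<in> S \<Longrightarrow> kapply S (kpow S P n) c x = c x"
proof (induction n arbitrary: x)
  case 0
  then show ?case by (simp add: kapply_kpow_0 finite_S)
next
  case (Suc n)
  have "kapply S (kpow S P n) (kapply S P c) x = kapply S (kpow S P n) c x"
    by (rule kapply_cong) (simp add: assms)
  then show ?case by (simp add: kapply_kpow_Suc Suc)
qed

lemma kpow_apply_poisson:
  assumes dec: "\<And>y. y \<in> S \<Longrightarrow> f y = h y - kapply S P h y + c y"
    and harm: "\<And>y. y \<in> S \<Longrightarrow> kapply S P c y = c y"
    and x: "x \<in> S"
  shows "kapply S (kpow S P n) f x
           = kapply S (kpow S P n) h x - kapply S (kpow S P (Suc n)) h x + c x"
proof -
  have "kapply S (kpow S P n) f x = kapply S (kpow S P n) (\<lambda>y. (h y - kapply S P h y) + c y) x"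
    by (rule kapply_cong) (simp add: dec)
  also have "\<dots> = kapply S (kpow S P n) h x - kapply S (kpow S P (Suc n)) h x + c x"
    by (simp add: kapply_add kapply_diff kapply_kpow_Suc kpow_apply_harmonic[OF harm x])
  finally show ?thesis .
qed

lemma harmonic_coboundary_eq_0:
  assumes u: "\<And>y. y \<in> S \<Longrightarrow> u y = h y - kapply S P h y"
    and harm: "\<And>y. y \<in> S \<Longrightarrow> kapply S P u y = u y"
    and x: "x \<in> S"
  shows "u x = 0"
proof (rule ccontr)
  assume "u x \<noteq> 0"
  have iter: "kapply S (kpow S P n) h x = h x - real n * u x" for n
  proof (induction n)
    case 0
    then show ?case by (simp add: kapply_kpow_0 finite_S x)
  next
    case (Suc n)
    have "kapply S (kpow S P n) u x = u x"
      by (rule kpow_apply_harmonic[OF harm x])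
    moreover have "kapply S (kpow S P n) u x
        = kapply S (kpow S P n) h x - kapply S (kpow S P (Suc n)) h x"
      using kpow_apply_poisson[where f=u and h=h and c="\<lambda>_. 0" and n=n] u x
      by (simp add: kapply_def)
    ultimately show ?case
      using Suc by (simp add: algebra_simps)
  qed
  define M where "M = (\<Sum>y\<in>S. \<bar>h y\<bar>)"
  have h_le: "\<bar>h y\<bar> \<le> M" if "y \<in> S" for y
    unfolding M_def using finite_S that by (intro member_le_sum) auto
  obtain n :: nat where n: "(2 * M + 1) / \<bar>u x\<bar> < real n"
    using reals_Archimedean2 by blast
  have "2 * M + 1 < real n * \<bar>u x\<bar>"
    using n \<open>u x \<noteq> 0\<close> by (simp add: divide_less_eq)
  moreover have "\<bar>h x - real n * u x\<bar> \<le> M"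
    using kpow_apply_abs_le[where f=h and M=M and n=n, OF h_le x] iter by simp
  ultimately show False
    using h_le[OF x] by (auto simp: abs_mult abs_le_iff)
qed

text \<open>Since no nonzero coboundary \<open>h - P h\<close> is harmonic, the finite-dimensional space of functions
  on \<open>S\<close> is the sum of the range and the kernel of \<open>I - P\<close>.\<close>

lemma poisson_decomposition:
  obtains h c where "\<And>x. x \<in> S \<Longrightarrow> f x = h x - kapply S P h x + c x"
    and "\<And>x. x \<in> S \<Longrightarrow> kapply S P c x = c x"
proof -
  define V where "V = {f :: 's \<Rightarrow> real. \<forall>x. x \<notin> S \<longrightarrow> f x = 0}"
  define restrict where "restrict f = (\<lambda>x. if x \<in> S then f x else 0)" for f :: "'s \<Rightarrow> real"
  define L where "L f = restrict (\<lambda>x. f x - kapply S P f x)" for f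
  have L_linear: "Vector_Spaces.linear scale_fun scale_fun L"
    by unfold_locales
      (auto simp: L_def restrict_def fun_eq_iff scale_fun_def plus_fun_def kapply_add kapply_cmult right_diff_distrib)
  have V_subspace: "real_fun.subspace V"
    by (auto simp: real_fun.subspace_def V_def scale_fun_def)
  have LV: "L ` V \<subseteq> V"
    by (auto simp: L_def restrict_def V_def)
  have range_kernel: "L v = 0" if "L (L v) = 0" for v
  proof -
    have "L v x = 0" for x
    proof (cases "x \<in> S")
      case True
      show ?thesis
      proof (rule harmonic_coboundary_eq_0[OF _ _ True])
        show "L v y = v y - kapply S P v y" if "y \<in> S" for y
          using that by (simp add: L_def restrict_def)
        show "kapply S P (L v) y = L v y" if "y \<in> S" for y
          using fun_cong[OF \<open>L (L v) = 0\<close>, of y] that by (simp add: L_def restrict_def)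
      qed
    qed (simp add: L_def restrict_def)
    thus ?thesis by (simp add: fun_eq_iff)
  qed
  obtain w where "L (restrict f - L w) = 0"
    using real_fun.range_kernel_decomposition[OF L_linear _ supported_in_span_indicators[OF finite_S, folded V_def]
        V_subspace LV range_kernel, of "restrict f"] finite_S
    by (auto simp: V_def restrict_def)
  define c where "c = restrict f - L w"
  have "kapply S P c x = c x" if "x \<in> S" for x
    using fun_cong[OF \<open>L (restrict f - L w) = 0\<close>, of x] that
    by (simp add: L_def restrict_def c_def)
  moreover have "f x = w x - kapply S P w x + c x" if "x \<in> S" for x
    using that by (simp add: c_def L_def restrict_def)
  ultimately show ?thesis
    using that by blast
qed

end

section \<open>Asymptotic variance of a stationary chain\<close>

lemma lim_ereal_affine_plus_decaying:
  fixes x e :: "nat \<Rightarrow> real"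
  assumes x: "\<And>T. T > 0 \<Longrightarrow> x T = C + real T * \<kappa> + e T / real T"
    and e: "\<And>T. \<bar>e T\<bar> \<le> B" and \<kappa>: "\<kappa> \<ge> 0"
  shows "lim (\<lambda>T. ereal (x T)) = (if \<kappa> = 0 then ereal C else \<infinity>)"
proof (cases "\<kappa> = 0")
  case True
  have "(\<lambda>T. e T / real T) \<longlonglongrightarrow> 0"
  proof (rule Lim_null_comparison)
    show "\<forall>\<^sub>F T in sequentially. norm (e T / real T) \<le> B / real T"
      using e by (auto intro!: eventually_sequentiallyI[of 1] divide_right_mono)
  qed (rule lim_const_over_n)
  hence "(\<lambda>T. C + e T / real T) \<longlonglongrightarrow> C"
    using tendsto_add[OF tendsto_const] by fastforce
  moreover have "\<forall>\<^sub>F T in sequentially. C + e T / real T = x T"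
    using x True by (auto intro!: eventually_sequentiallyI[of 1])
  ultimately have "x \<longlonglongrightarrow> C"
    by (rule Lim_transform_eventually)
  thus ?thesis
    using True by (simp add: limI tendsto_ereal)
next
  case False
  have "filterlim (\<lambda>T. (C - B) + \<kappa> * real T) at_top sequentially"
    using \<kappa> False
    by (intro filterlim_tendsto_add_at_top[OF tendsto_const]
        filterlim_tendsto_pos_mult_at_top[OF tendsto_const _ filterlim_real_sequentially]) auto
  moreover have "\<forall>\<^sub>F T in sequentially. (C - B) + \<kappa> * real T \<le> x T"
  proof (rule eventually_sequentiallyI[of 1])
    fix T :: nat assume "1 \<le> T"
    have "\<bar>e T\<bar> * 1 \<le> \<bar>e T\<bar> * real T"
      using \<open>1 \<le> T\<close> by (intro mult_left_mono) auto
    hence "\<bar>e T\<bar> / real T \<le> \<bar>e T\<bar>"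
      using \<open>1 \<le> T\<close> by (simp add: divide_le_eq)
    hence "\<bar>e T / real T\<bar> \<le> B"
      using e[of T] by simp
    thus "(C - B) + \<kappa> * real T \<le> x T"
      using x[of T] \<open>1 \<le> T\<close> abs_le_D2 by fastforce
  qed
  ultimately have "filterlim x at_top sequentially"
    by (rule filterlim_at_top_mono)
  hence "(\<lambda>T. ereal (x T)) \<longlonglongrightarrow> \<infinity>"
    by (simp add: tendsto_PInfty_eq_at_top)
  thus ?thesis
    using False by (simp add: limI)
qed

definition lag_sum :: "(nat \<Rightarrow> real) \<Rightarrow> nat \<Rightarrow> real" where
  "lag_sum \<gamma> T = (\<Sum>s\<in>{1..T}. \<Sum>t\<in>{1..T}. \<gamma> (if s \<le> t then t - s else s - t))"

lemma lag_sum_Suc: "lag_sum \<gamma> (Suc T) = lag_sum \<gamma> T + \<gamma> 0 + 2 * (\<Sum>k\<in>{1..T}. \<gamma> k)"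
proof -
  define G where "G s t = \<gamma> (if s \<le> t then t - s else s - t)" for s t :: nat
  have last_row: "(\<Sum>t\<in>{1..T}. G (Suc T) t) = (\<Sum>k\<in>{1..T}. \<gamma> k)"
  proof -
    have "(\<Sum>t\<in>{1..T}. G (Suc T) t) = (\<Sum>t\<in>{1..T}. \<gamma> (Suc T - t))"
      by (rule sum.cong) (auto simp: G_def)
    also have "\<dots> = (\<Sum>k\<in>{1..T}. \<gamma> k)"
      by (rule sum.reindex_bij_witness[where i="\<lambda>k. Suc T - k" and j="\<lambda>t. Suc T - t"]) auto
    finally show ?thesis .
  qed
  have last_column: "(\<Sum>s\<in>{1..T}. G s (Suc T)) = (\<Sum>t\<in>{1..T}. G (Suc T) t)"
    by (rule sum.cong) (auto simp: G_def)
  have "lag_sum \<gamma> (Suc T) = (\<Sum>s\<in>insert (Suc T) {1..T}. \<Sum>t\<in>insert (Suc T) {1..T}. G s t)"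
    by (simp add: lag_sum_def G_def atLeastAtMostSuc_conv)
  also have "\<dots> = G (Suc T) (Suc T) + (\<Sum>t\<in>{1..T}. G (Suc T) t)
       + (\<Sum>s\<in>{1..T}. G s (Suc T)) + (\<Sum>s\<in>{1..T}. \<Sum>t\<in>{1..T}. G s t)"
    by (simp add: sum.distrib)
  also have "(\<Sum>s\<in>{1..T}. \<Sum>t\<in>{1..T}. G s t) = lag_sum \<gamma> T"
    by (simp add: lag_sum_def G_def)
  also have "G (Suc T) (Suc T) = \<gamma> 0"
    by (simp add: G_def)
  finally show ?thesis
    using last_row last_column by simp
qed

lemma sum_affine_telescope:
  assumes "\<And>k. \<gamma> k = \<beta> k - \<beta> (Suc k) + (\<kappa>::real)"
  shows "(\<Sum>k\<in>{1..T}. \<gamma> k) = \<beta> 1 - \<beta> (Suc T) + real T * \<kappa>"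
  by (induction T) (auto simp: assms atLeastAtMostSuc_conv algebra_simps)

lemma lag_sum_affine_telescope:
  assumes "\<And>k. \<gamma> k = \<beta> k - \<beta> (Suc k) + (\<kappa>::real)"
  shows "lag_sum \<gamma> T = real T * (\<beta> 0 + \<beta> 1) - 2 * (\<Sum>k\<in>{1..T}. \<beta> k) + (real T)\<^sup>2 * \<kappa>"
proof (induction T)
  case 0
  then show ?case by (simp add: lag_sum_def)
next
  case (Suc T)
  have "lag_sum \<gamma> (Suc T) = lag_sum \<gamma> T + \<gamma> 0 + 2 * (\<beta> 1 - \<beta> (Suc T) + real T * \<kappa>)"
    using lag_sum_Suc[of \<gamma> T] sum_affine_telescope[where \<gamma>=\<gamma> and \<beta>=\<beta> and \<kappa>=\<kappa> and T=T, OF assms]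
    by simp
  then show ?case
    using Suc.IH assms[of 0] by (simp add: atLeastAtMostSuc_conv algebra_simps power2_eq_square)
qed

locale stationary_chain = stochastic_kernel +
  fixes \<mu> :: "'s \<Rightarrow> real"
  assumes mu_nonneg: "\<And>x. x \<in> S \<Longrightarrow> \<mu> x \<ge> 0"
    and mu_sum: "(\<Sum>x\<in>S. \<mu> x) = 1"
    and stationary: "\<And>y. y \<in> S \<Longrightarrow> (\<Sum>x\<in>S. \<mu> x * P x y) = \<mu> y"
begin

definition inner_mu :: "('s \<Rightarrow> real) \<Rightarrow> ('s \<Rightarrow> real) \<Rightarrow> real" where
  "inner_mu f g = (\<Sum>x\<in>S. \<mu> x * f x * g x)"

definition mean :: "('s \<Rightarrow> real) \<Rightarrow> real" where
  "mean f = (\<Sum>x\<in>S. \<mu> x * f x)"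

definition centered :: "('s \<Rightarrow> real) \<Rightarrow> 's \<Rightarrow> real" where
  "centered f x = f x - mean f"

definition dirichlet_form :: "('s \<Rightarrow> real) \<Rightarrow> real" where
  "dirichlet_form f = inner_mu f f - inner_mu f (kapply S P f)"

lemma inner_mu_cong:
  "(\<And>x. x \<in> S \<Longrightarrow> f x = f' x) \<Longrightarrow> (\<And>x. x \<in> S \<Longrightarrow> g x = g' x) \<Longrightarrow> inner_mu f g = inner_mu f' g'"
  by (simp add: inner_mu_def)

lemma inner_mu_commute: "inner_mu f g = inner_mu g f"
  by (simp add: inner_mu_def algebra_simps)

lemma inner_mu_add_left: "inner_mu (\<lambda>x. f x + g x) h = inner_mu f h + inner_mu g h"
  by (simp add: inner_mu_def algebra_simps sum.distrib)

lemma inner_mu_diff_left: "inner_mu (\<lambda>x. f x - g x) h = inner_mu f h - inner_mu g h"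
  by (simp add: inner_mu_def algebra_simps sum_subtractf)

lemma inner_mu_add_right: "inner_mu h (\<lambda>x. f x + g x) = inner_mu h f + inner_mu h g"
  by (simp add: inner_mu_def algebra_simps sum.distrib)

lemma inner_mu_diff_right: "inner_mu h (\<lambda>x. f x - g x) = inner_mu h f - inner_mu h g"
  by (simp add: inner_mu_def algebra_simps sum_subtractf)

lemma inner_mu_self_nonneg: "inner_mu f f \<ge> 0"
  unfolding inner_mu_def by (intro sum_nonneg) (auto simp: mu_nonneg mult.assoc)

lemma inner_mu_null:
  assumes "inner_mu c c = 0"
  shows "inner_mu c f = 0"
proof -
  have "\<forall>x\<in>S. \<mu> x * c x * c x = 0"
    using assms finite_S unfolding inner_mu_def
    by (subst (asm) sum_nonneg_eq_0_iff) (auto simp: mu_nonneg mult.assoc)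
  hence "\<forall>x\<in>S. \<mu> x * c x = 0"
    by auto
  thus ?thesis
    unfolding inner_mu_def by (intro sum.neutral) auto
qed

lemma mean_kpow_apply: "mean (kapply S (kpow S P n) f) = mean f"
proof (induction n arbitrary: f)
  case 0
  then show ?case
    unfolding mean_def by (intro sum.cong) (auto simp: kapply_kpow_0 finite_S)
next
  case (Suc n)
  have "mean (kapply S P f) = (\<Sum>x\<in>S. \<Sum>y\<in>S. \<mu> x * P x y * f y)"
    by (simp add: mean_def kapply_def sum_distrib_left mult.assoc)
  also have "\<dots> = (\<Sum>y\<in>S. (\<Sum>x\<in>S. \<mu> x * P x y) * f y)"
    by (subst sum.swap) (simp add: sum_distrib_right)
  also have "\<dots> = mean f"
    unfolding mean_def by (intro sum.cong) (auto simp: stationary)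
  finally show ?case
    using Suc[of "kapply S P f"] by (simp add: kapply_kpow_Suc)
qed

lemma law_at_stationary: "y \<in> S \<Longrightarrow> law_at S \<mu> P t y = \<mu> y"
proof (induction t arbitrary: y)
  case 0
  have "law_at S \<mu> P 0 y = (\<Sum>x\<in>S. if x = y then \<mu> x else 0)"
    unfolding law_at_def by (intro sum.cong) (auto simp: kpow.simps)
  then show ?case
    using 0 finite_S by simp
next
  case (Suc t)
  have "law_at S \<mu> P (Suc t) y = (\<Sum>x\<in>S. \<Sum>z\<in>S. \<mu> x * kpow S P t x z * P z y)"
    by (simp add: law_at_def kpow.simps kcomp_def sum_distrib_left mult.assoc)
  also have "\<dots> = (\<Sum>z\<in>S. law_at S \<mu> P t z * P z y)"
    by (subst sum.swap) (simp add: law_at_def sum_distrib_right)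
  finally have "law_at S \<mu> P (Suc t) y = (\<Sum>z\<in>S. law_at S \<mu> P t z * P z y)" .
  then show ?case
    using Suc stationary by simp
qed

lemma mean_at_stationary: "mean_at S \<mu> P g t = mean g"
  unfolding mean_at_def mean_def by (intro sum.cong) (auto simp: law_at_stationary)

lemma prod_mom_stationary:
  "prod_mom S \<mu> P g s t = inner_mu g (kapply S (kpow S P (if s \<le> t then t - s else s - t)) g)"
proof -
  have "prod_mom0 S \<mu> P g a b = inner_mu g (kapply S (kpow S P (b - a)) g)" for a b
    unfolding prod_mom0_def inner_mu_def kapply_def
    by (intro sum.cong) (auto simp: law_at_stationary sum_distrib_left mult.assoc)
  thus ?thesis
    by (simp add: prod_mom_def)
qed

lemma scaled_var_avg_eq_lag_sum:
  assumes "T > 0"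
  shows "real T * var_avg S \<mu> P g T
           = lag_sum (\<lambda>k. inner_mu (centered g) (kapply S (kpow S P k) (centered g))) T / real T"
proof -
  have autocov: "inner_mu (centered g) (kapply S (kpow S P k) (centered g))
          = inner_mu g (kapply S (kpow S P k) g) - (mean g)\<^sup>2" for k
  proof -
    have "kapply S (kpow S P k) (centered g) x = kapply S (kpow S P k) g x - mean g"
      if "x \<in> S" for x
      using kapply_diff[of S "kpow S P k" g "\<lambda>_. mean g" x] kpow_apply_harmonic[OF kapply_const that]
      by (simp add: centered_def[abs_def])
    hence "inner_mu (centered g) (kapply S (kpow S P k) (centered g))
        = inner_mu (centered g) (\<lambda>x. kapply S (kpow S P k) g x - mean g)"
      by (intro inner_mu_cong) auto
    also have "\<dots> = inner_mu g (kapply S (kpow S P k) g)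
        - mean g * (\<Sum>x\<in>S. \<mu> x * kapply S (kpow S P k) g x)
        - mean g * (\<Sum>x\<in>S. \<mu> x * g x) + mean g * mean g * (\<Sum>x\<in>S. \<mu> x)"
      unfolding inner_mu_def centered_def
      by (simp add: algebra_simps sum.distrib sum_subtractf sum_distrib_left sum_distrib_right)
    finally show ?thesis
      using mean_kpow_apply[of k g]
      by (simp add: mean_def mu_sum power2_eq_square flip: sum_distrib_right)
  qed
  hence "(\<Sum>s\<in>{1..T}. \<Sum>t\<in>{1..T}. prod_mom S \<mu> P g s t) - (\<Sum>t\<in>{1..T}. mean_at S \<mu> P g t)\<^sup>2
      = lag_sum (\<lambda>k. inner_mu (centered g) (kapply S (kpow S P k) (centered g))) T"
    by (simp add: lag_sum_def autocov prod_mom_stationary mean_at_stationary sum_subtractf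
        power2_eq_square)
  thus ?thesis
    using assms by (simp add: var_avg_def power2_eq_square field_simps)
qed

lemma dirichlet_form_eq:
  "dirichlet_form f = (\<Sum>x\<in>S. \<Sum>y\<in>S. \<mu> x * P x y * (f x - f y)\<^sup>2) / 2"
proof -
  have "(\<Sum>x\<in>S. \<Sum>y\<in>S. \<mu> x * P x y * (f y)\<^sup>2) = inner_mu f f"
  proof -
    have "(\<Sum>x\<in>S. \<Sum>y\<in>S. \<mu> x * P x y * (f y)\<^sup>2) = (\<Sum>y\<in>S. (\<Sum>x\<in>S. \<mu> x * P x y) * (f y)\<^sup>2)"
      by (subst sum.swap) (simp add: sum_distrib_right)
    also have "\<dots> = inner_mu f f"
      unfolding inner_mu_def by (intro sum.cong) (auto simp: stationary power2_eq_square)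
    finally show ?thesis .
  qed
  moreover have "(\<Sum>x\<in>S. \<Sum>y\<in>S. \<mu> x * P x y * (f x)\<^sup>2) = inner_mu f f"
    unfolding inner_mu_def
    by (intro sum.cong) (auto simp: kernel_row_sum power2_eq_square mult.assoc
        simp flip: sum_distrib_left sum_distrib_right)
  moreover have "(\<Sum>x\<in>S. \<Sum>y\<in>S. \<mu> x * P x y * (f x * f y)) = inner_mu f (kapply S P f)"
    by (simp add: inner_mu_def kapply_def sum_distrib_left algebra_simps)
  moreover have "(\<Sum>x\<in>S. \<Sum>y\<in>S. \<mu> x * P x y * (f x - f y)\<^sup>2)
      = (\<Sum>x\<in>S. \<Sum>y\<in>S. \<mu> x * P x y * (f x)\<^sup>2) + (\<Sum>x\<in>S. \<Sum>y\<in>S. \<mu> x * P x y * (f y)\<^sup>2)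
        - 2 * (\<Sum>x\<in>S. \<Sum>y\<in>S. \<mu> x * P x y * (f x * f y))"
    by (simp add: power2_diff sum.distrib sum_subtractf sum_distrib_left algebra_simps)
  ultimately show ?thesis
    by (simp add: dirichlet_form_def)
qed

lemma dirichlet_form_nonneg: "dirichlet_form f \<ge> 0"
  unfolding dirichlet_form_eq by (intro divide_nonneg_pos sum_nonneg) (auto simp: mu_nonneg kernel_nonneg)

lemma dirichlet_form_add:
  "dirichlet_form (\<lambda>x. f x + g x) = dirichlet_form f + dirichlet_form g + 2 * inner_mu f g
     - (inner_mu f (kapply S P g) + inner_mu g (kapply S P f))"
  by (simp add: dirichlet_form_def inner_mu_def kapply_add sum.distrib algebra_simps
      sum_distrib_left)

lemma harmonic_constant_along_transitions:
  assumes harm: "\<And>x. x \<in> S \<Longrightarrow> kapply S P c x = c x" and x: "x \<in> S" and y: "y \<in> S"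
  shows "\<mu> x * P x y * c x = \<mu> x * P x y * c y"
proof -
  have "dirichlet_form c = 0"
    unfolding dirichlet_form_def using harm by (simp add: inner_mu_def)
  hence "(\<Sum>x\<in>S. \<Sum>y\<in>S. \<mu> x * P x y * (c x - c y)\<^sup>2) = 0"
    by (simp add: dirichlet_form_eq)
  hence "\<forall>x\<in>S. \<forall>y\<in>S. \<mu> x * P x y * (c x - c y)\<^sup>2 = 0"
    using finite_S
    by (subst (asm) sum_nonneg_eq_0_iff; auto intro!: sum_nonneg simp: mu_nonneg kernel_nonneg
        sum_nonneg_eq_0_iff)
  thus ?thesis
    using x y by (auto simp: algebra_simps)
qed

lemma inner_mu_kapply_harmonic:
  assumes harm: "\<And>x. x \<in> S \<Longrightarrow> kapply S P c x = c x"
  shows "inner_mu (kapply S P f) c = inner_mu f c"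
proof -
  have "inner_mu (kapply S P f) c = (\<Sum>x\<in>S. \<Sum>y\<in>S. \<mu> x * P x y * c x * f y)"
    by (simp add: inner_mu_def kapply_def sum_distrib_left sum_distrib_right algebra_simps)
  also have "\<dots> = (\<Sum>x\<in>S. \<Sum>y\<in>S. \<mu> x * P x y * c y * f y)"
    using harmonic_constant_along_transitions[OF harm] by (intro sum.cong refl) simp
  also have "\<dots> = (\<Sum>y\<in>S. (\<Sum>x\<in>S. \<mu> x * P x y) * c y * f y)"
    by (subst sum.swap) (simp add: sum_distrib_right)
  also have "\<dots> = inner_mu f c"
    unfolding inner_mu_def by (intro sum.cong) (auto simp: stationary)
  finally show ?thesis .
qed

lemma inner_mu_poisson_harmonic:
  assumes dec: "\<And>x. x \<in> S \<Longrightarrow> f x = h x - kapply S P h x + c x"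
    and harm: "\<And>x. x \<in> S \<Longrightarrow> kapply S P c' x = c' x"
  shows "inner_mu f c' = inner_mu c c'"
proof -
  have "inner_mu f c' = inner_mu (\<lambda>x. (h x - kapply S P h x) + c x) c'"
    by (intro inner_mu_cong) (auto simp: dec)
  thus ?thesis
    by (simp add: inner_mu_add_left inner_mu_diff_left inner_mu_kapply_harmonic[OF harm])
qed

lemma inner_mu_kpow_apply_bounded: "\<exists>B. \<forall>k. \<bar>inner_mu f (kapply S (kpow S P k) h)\<bar> \<le> B"
proof (intro exI allI)
  define M where "M = (\<Sum>y\<in>S. \<bar>h y\<bar>)"
  have "\<bar>h y\<bar> \<le> M" if "y \<in> S" for y
    unfolding M_def using finite_S that by (intro member_le_sum) auto
  hence "\<bar>kapply S (kpow S P k) h x\<bar> \<le> M" if "x \<in> S" for x k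
    using kpow_apply_abs_le that by blast
  hence "\<bar>\<mu> x * f x * kapply S (kpow S P k) h x\<bar> \<le> \<mu> x * \<bar>f x\<bar> * M" if "x \<in> S" for x k
    using that mu_nonneg[OF that] by (auto simp: abs_mult intro!: mult_left_mono)
  thus "\<bar>inner_mu f (kapply S (kpow S P k) h)\<bar> \<le> (\<Sum>x\<in>S. \<mu> x * \<bar>f x\<bar> * M)" for k
    unfolding inner_mu_def by (intro order.trans[OF sum_abs] sum_mono) auto
qed

lemma inner_mu_poisson_null:
  assumes dec: "\<And>x. x \<in> S \<Longrightarrow> f x = h x - kapply S P h x + c x" and null: "inner_mu c c = 0"
  shows "inner_mu f w = inner_mu h w - inner_mu (kapply S P h) w"
proof -
  have "inner_mu f w = inner_mu (\<lambda>x. (h x - kapply S P h x) + c x) w"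
    by (intro inner_mu_cong) (auto simp: dec)
  thus ?thesis
    using inner_mu_null[OF null, of w] by (simp add: inner_mu_add_left inner_mu_diff_left)
qed

lemma dirichlet_form_poisson_null:
  assumes dec: "\<And>x. x \<in> S \<Longrightarrow> f x = h x - kapply S P h x + c x" and null: "inner_mu c c = 0"
  shows "inner_mu f h = dirichlet_form h"
  using inner_mu_poisson_null[OF dec null, of h] by (simp add: dirichlet_form_def inner_mu_commute)

lemma inner_mu_kapply_reversible:
  assumes reversible: "\<And>x y. x \<in> S \<Longrightarrow> y \<in> S \<Longrightarrow> \<mu> x * P x y = \<mu> y * P y x"
  shows "inner_mu (kapply S P f) g = inner_mu f (kapply S P g)"
proof -
  have "inner_mu (kapply S P f) g = (\<Sum>x\<in>S. \<Sum>y\<in>S. \<mu> x * P x y * f y * g x)"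
    by (simp add: inner_mu_def kapply_def sum_distrib_left sum_distrib_right algebra_simps)
  also have "\<dots> = (\<Sum>x\<in>S. \<Sum>y\<in>S. \<mu> y * P y x * f y * g x)"
    by (intro sum.cong refl) (simp add: reversible)
  also have "\<dots> = inner_mu f (kapply S P g)"
    by (subst sum.swap) (simp add: inner_mu_def kapply_def sum_distrib_left algebra_simps)
  finally show ?thesis .
qed

text \<open>For reversible \<open>P\<close>, the solution \<open>h\<close> of the Poisson equation maximises
  \<open>2 \<langle>f, a\<rangle> - dirichlet_form a\<close>; the gap is \<open>dirichlet_form (h - a) \<ge> 0\<close>.\<close>

lemma reversible_poisson_variational:
  assumes reversible: "\<And>x y. x \<in> S \<Longrightarrow> y \<in> S \<Longrightarrow> \<mu> x * P x y = \<mu> y * P y x"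
    and dec: "\<And>x. x \<in> S \<Longrightarrow> f x = h x - kapply S P h x + c x" and null: "inner_mu c c = 0"
  shows "2 * inner_mu f a - dirichlet_form a \<le> inner_mu f h"
proof -
  have "0 \<le> dirichlet_form (\<lambda>x. h x - a x)"
    by (rule dirichlet_form_nonneg)
  also have "\<dots> = dirichlet_form h - 2 * (inner_mu h a - inner_mu (kapply S P h) a) + dirichlet_form a"
    using inner_mu_kapply_reversible[OF reversible, of h a] inner_mu_commute[of a]
      inner_mu_commute[of h "kapply S P a"]
    by (simp add: dirichlet_form_def inner_mu_def kapply_diff sum_subtractf sum.distrib
        sum_distrib_left algebra_simps)
  also have "\<dots> = inner_mu f h - 2 * inner_mu f a + dirichlet_form a"
    using dirichlet_form_poisson_null[OF dec null] inner_mu_poisson_null[OF dec null, of a] by simp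
  finally show ?thesis
    by simp
qed

text \<open>The autocovariances of the centred observable telescope twice, leaving the constant
  \<open>\<langle>c, c\<rangle>\<close>; so \<open>T\<close> times the variance of the ergodic average is affine in \<open>T\<close> with slope
  \<open>\<langle>c, c\<rangle>\<close>, up to an error \<open>O(1/T)\<close>.\<close>

theorem asym_var_poisson:
  assumes dec: "\<And>x. x \<in> S \<Longrightarrow> centered g x = h x - kapply S P h x + c x"
    and harm: "\<And>x. x \<in> S \<Longrightarrow> kapply S P c x = c x"
  shows "asym_var S \<mu> P g = (if inner_mu c c = 0
           then ereal (2 * inner_mu (centered g) h - inner_mu (centered g) (centered g)) else \<infinity>)"
proof -
  obtain h' c' where dec': "\<And>x. x \<in> S \<Longrightarrow> h x = h' x - kapply S P h' x + c' x"
    and harm': "\<And>x. x \<in> S \<Longrightarrow> kapply S P c' x = c' x"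
    using poisson_decomposition by blast
  define \<beta> where "\<beta> k = inner_mu (centered g) (kapply S (kpow S P k) h)" for k
  define \<delta> where "\<delta> k = inner_mu (centered g) (kapply S (kpow S P k) h')" for k
  define \<kappa> where "\<kappa> = inner_mu c c"
  define \<epsilon> where "\<epsilon> = inner_mu c c'"
  have \<gamma>: "inner_mu (centered g) (kapply S (kpow S P k) (centered g)) = \<beta> k - \<beta> (Suc k) + \<kappa>" for k
    using inner_mu_cong[OF refl kpow_apply_poisson[OF dec harm]]
      inner_mu_poisson_harmonic[OF dec harm]
    by (simp add: \<beta>_def \<kappa>_def inner_mu_add_right inner_mu_diff_right)
  have \<beta>: "\<beta> k = \<delta> k - \<delta> (Suc k) + \<epsilon>" for k
    using inner_mu_cong[OF refl kpow_apply_poisson[OF dec' harm']]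
      inner_mu_poisson_harmonic[OF dec harm']
    by (simp add: \<beta>_def \<delta>_def \<epsilon>_def inner_mu_add_right inner_mu_diff_right)
  obtain B where B: "\<And>k. \<bar>\<delta> k\<bar> \<le> B"
    using inner_mu_kpow_apply_bounded unfolding \<delta>_def by blast
  have "real T * var_avg S \<mu> P g T = (\<beta> 0 + \<beta> 1 - 2 * \<epsilon>) + real T * \<kappa>
          + (- 2 * (\<delta> 1 - \<delta> (Suc T))) / real T" if "T > 0" for T
    using that scaled_var_avg_eq_lag_sum[OF that, of g] lag_sum_affine_telescope[where \<beta>=\<beta> and \<kappa>=\<kappa> and T=T
        and \<gamma>="\<lambda>k. inner_mu (centered g) (kapply S (kpow S P k) (centered g))", OF \<gamma>]
      sum_affine_telescope[where \<gamma>=\<beta> and \<beta>=\<delta> and \<kappa>=\<epsilon> and T=T, OF \<beta>]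
    by (simp add: field_simps power2_eq_square)
  moreover have "\<bar>- 2 * (\<delta> 1 - \<delta> (Suc T))\<bar> \<le> 4 * B" for T
    using B[of 1] B[of "Suc T"] by (simp add: abs_le_iff)
  ultimately have "asym_var S \<mu> P g = (if \<kappa> = 0 then ereal (\<beta> 0 + \<beta> 1 - 2 * \<epsilon>) else \<infinity>)"
    unfolding asym_var_def
    by (intro lim_ereal_affine_plus_decaying) (auto simp: \<kappa>_def inner_mu_self_nonneg)
  moreover have "\<beta> 0 + \<beta> 1 = 2 * inner_mu (centered g) h - inner_mu (centered g) (centered g) + \<kappa>"
  proof -
    have "\<beta> 1 = inner_mu (centered g) (\<lambda>x. (h x - centered g x) + c x)"
      unfolding \<beta>_def
      by (intro inner_mu_cong) (auto simp: kapply_kpow_Suc kapply_kpow_0 finite_S dec)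
    moreover have "\<beta> 0 = inner_mu (centered g) h"
      unfolding \<beta>_def by (intro inner_mu_cong) (auto simp: kapply_kpow_0 finite_S)
    ultimately show ?thesis
      using inner_mu_poisson_harmonic[OF dec harm]
      by (simp add: \<kappa>_def inner_mu_add_right inner_mu_diff_right)
  qed
  moreover have "\<kappa> = 0 \<Longrightarrow> \<epsilon> = 0"
    using inner_mu_null by (simp add: \<kappa>_def \<epsilon>_def)
  ultimately show ?thesis
    by (auto simp: \<kappa>_def)
qed

end

section \<open>Velocities and the flip and lift kernels\<close>

definition flip :: "nat \<Rightarrow> (nat \<Rightarrow> int) \<Rightarrow> nat \<Rightarrow> int" where
  "flip d v = v(d := - v d)"

definition flip_all :: "nat \<Rightarrow> (nat \<Rightarrow> int) \<Rightarrow> nat \<Rightarrow> int" where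
  "flip_all D v = (\<lambda>j. if j \<in> {1..D} then - v j else v j)"

lemma vels_pm_one: "v \<in> vels D \<Longrightarrow> d \<in> {1..D} \<Longrightarrow> v d = 1 \<or> v d = -1"
  by (auto simp: vels_def)

lemma flip_in_vels: "v \<in> vels D \<Longrightarrow> d \<in> {1..D} \<Longrightarrow> flip d v \<in> vels D"
  by (auto simp: vels_def flip_def)

lemma flip_flip [simp]: "flip d (flip d v) = v"
  by (auto simp: flip_def fun_eq_iff)

lemma flip_same [simp]: "flip d v d = - v d"
  by (simp add: flip_def)

lemma flip_iff: "((\<forall>j. j \<noteq> d \<longrightarrow> v j = v' j) \<and> v' d = - v d) \<longleftrightarrow> v' = flip d v"
  by (auto simp: flip_def fun_eq_iff)

lemma flip_all_in_vels: "v \<in> vels D \<Longrightarrow> flip_all D v \<in> vels D"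
  by (auto simp: vels_def flip_all_def)

lemma flip_all_flip_all [simp]: "flip_all D (flip_all D v) = v"
  by (auto simp: flip_all_def fun_eq_iff)

lemma flip_all_eq_iff [simp]: "flip_all D v = flip_all D v' \<longleftrightarrow> v = v'"
  by (metis flip_all_flip_all)

lemma flip_all_apply: "d \<in> {1..D} \<Longrightarrow> flip_all D v d = - v d"
  by (simp add: flip_all_def)

lemma flip_all_flip: "d \<in> {1..D} \<Longrightarrow> flip_all D (flip d v) = flip d (flip_all D v)"
  by (auto simp: flip_all_def flip_def fun_eq_iff)

lemma vels_eq_image_Pow: "vels D = (\<lambda>B j. if j \<in> B then -1 else 1) ` Pow {1..D}"
proof
  show "vels D \<subseteq> (\<lambda>B j. if j \<in> B then -1 else 1) ` Pow {1..D}"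
  proof
    fix v assume "v \<in> vels D"
    hence "v = (\<lambda>j. if j \<in> {j\<in>{1..D}. v j = -1} then -1 else 1)"
      by (auto simp: vels_def fun_eq_iff)
    thus "v \<in> (\<lambda>B j. if j \<in> B then -1 else 1) ` Pow {1..D}"
      by blast
  qed
qed (auto simp: vels_def)

lemma finite_vels [simp]: "finite (vels D)"
  by (simp add: vels_eq_image_Pow)

lemma card_vels: "card (vels D) = 2 ^ D"
proof -
  have "inj_on (\<lambda>B j. if j \<in> B then -1 else (1::int)) (Pow {1..D})"
    by (rule inj_onI) (metis (full_types) equalityI subsetI one_neq_neg_one)
  hence "card (vels D) = card (Pow {1..D::nat})"
    by (simp add: vels_eq_image_Pow card_image)
  thus ?thesis
    by (simp add: card_Pow)
qed

lemma Fd_eq: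
  "Fd \<alpha> d (c, v) (c', v')
     = (if c = c' then (1 - \<alpha>) * (if v' = v then 1 else 0) + \<alpha> * (if v' = flip d v then 1 else 0)
        else 0)"
  unfolding Fd_def by (simp add: flip_iff eq_commute[of v v'])

lemma Fd_nonzero_fst: "Fd \<alpha> d x z \<noteq> 0 \<Longrightarrow> fst x = fst z"
  by (auto simp: Fd_def split: prod.splits if_splits)

lemma Klift_eq:
  assumes v: "v \<in> vels D" "v' \<in> vels D" and d: "d \<in> {1..D}"
  shows "Klift K d (c, v) (c', v')
           = (if c \<noteq> c' then (if v' = v then K d (v d) c c' else 0)
              else (if v' = flip d v then K d (v d) c c else 0))"
proof (cases "\<forall>j. j \<noteq> d \<longrightarrow> v j = v' j")
  case True
  hence "v' = v \<longleftrightarrow> v d = v' d" "v' = flip d v \<longleftrightarrow> v d = - v' d"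
    by (auto simp: fun_eq_iff flip_def; metis)+
  then show ?thesis
    using True unfolding Klift_def Qd_def by auto
next
  case False
  hence "v' \<noteq> v" "v' \<noteq> flip d v"
    by (auto simp: flip_def)
  then show ?thesis
    using False unfolding Klift_def Qd_def by auto
qed

lemma sum_lifted_space:
  "(\<Sum>x\<in>(UNIV::'c::finite set) \<times> vels D. f x) = (\<Sum>c\<in>UNIV. \<Sum>v\<in>vels D. f (c, v))"
  by (simp add: sum.cartesian_product)

lemma kapply_Fd:
  fixes f :: "'c::finite \<times> (nat \<Rightarrow> int) \<Rightarrow> real"
  assumes v: "v \<in> vels D" and d: "d \<in> {1..D}"
  shows "kapply (UNIV \<times> vels D) (Fd \<alpha> d) f (c, v) = (1 - \<alpha>) * f (c, v) + \<alpha> * f (c, flip d v)"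
proof -
  have "kapply (UNIV \<times> vels D) (Fd \<alpha> d) f (c, v)
      = (\<Sum>c'\<in>UNIV. if c' = c then (\<Sum>v'\<in>vels D. Fd \<alpha> d (c, v) (c, v') * f (c, v')) else 0)"
    unfolding kapply_def sum_lifted_space by (intro sum.cong) (auto simp: Fd_eq)
  also have "\<dots> = (\<Sum>v'\<in>vels D. (1 - \<alpha>) * (if v' = v then f (c, v') else 0)
           + \<alpha> * (if v' = flip d v then f (c, v') else 0))"
    by (simp, intro sum.cong) (auto simp: Fd_eq algebra_simps)
  also have "\<dots> = (1 - \<alpha>) * f (c, v) + \<alpha> * f (c, flip d v)"
    using v flip_in_vels[OF v d] by (simp add: sum.distrib sum_distrib_left[symmetric])
  finally show ?thesis .
qed

lemma kapply_Klift:
  fixes f :: "'c::finite \<times> (nat \<Rightarrow> int) \<Rightarrow> real"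
  assumes v: "v \<in> vels D" and d: "d \<in> {1..D}"
  shows "kapply (UNIV \<times> vels D) (Klift K d) f (c, v)
           = (\<Sum>c'\<in>UNIV. K d (v d) c c' * f (c', if c' = c then flip d v else v))"
proof -
  have "kapply (UNIV \<times> vels D) (Klift K d) f (c, v)
      = (\<Sum>c'\<in>UNIV. \<Sum>v'\<in>vels D.
           if v' = (if c' = c then flip d v else v) then K d (v d) c c' * f (c', v') else 0)"
    unfolding kapply_def sum_lifted_space
    by (intro sum.cong refl) (auto simp: Klift_eq[OF v _ d])
  also have "\<dots> = (\<Sum>c'\<in>UNIV. K d (v d) c c' * f (c', if c' = c then flip d v else v))"
    using v flip_in_vels[OF v d] by (intro sum.cong refl) (simp add: sum.delta')
  finally show ?thesis .
qed

locale lifted_kernels =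
  fixes \<pi> :: "'c::finite \<Rightarrow> real"
    and D :: nat and \<alpha> :: real
    and K :: "nat \<Rightarrow> int \<Rightarrow> 'c \<Rightarrow> 'c \<Rightarrow> real"
    and p :: "'c \<Rightarrow> nat \<Rightarrow> real"
  assumes pi_nonneg: "\<And>c. \<pi> c \<ge> 0"
    and pi_sum: "(\<Sum>c\<in>UNIV. \<pi> c) = 1"
    and alpha: "0 \<le> \<alpha>" "\<alpha> \<le> 1"
    and K_nonneg: "\<And>d s c c'. d \<in> {1..D} \<Longrightarrow> s \<in> {1, -1} \<Longrightarrow> K d s c c' \<ge> 0"
    and K_stoch: "\<And>d s c. d \<in> {1..D} \<Longrightarrow> s \<in> {1, -1} \<Longrightarrow> (\<Sum>c'\<in>UNIV. K d s c c') = 1"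
    and skew_bal: "\<And>d c c'. d \<in> {1..D} \<Longrightarrow> c \<noteq> c' \<Longrightarrow>
                      \<pi> c * K d 1 c c' = \<pi> c' * K d (-1) c' c"
    and p_nonneg: "\<And>c d. d \<in> {1..D} \<Longrightarrow> p c d \<ge> 0"
    and p_sum: "\<And>c. (\<Sum>d\<in>{1..D}. p c d) = 1"
    and p_const: "\<And>d c c'. d \<in> {1..D} \<Longrightarrow> Kavg K d c c' > 0 \<Longrightarrow> p c d = p c' d"
begin

abbreviation \<Omega> :: "('c \<times> (nat \<Rightarrow> int)) set" where
  "\<Omega> \<equiv> UNIV \<times> vels D"

abbreviation \<mu> :: "'c \<times> (nat \<Rightarrow> int) \<Rightarrow> real" where
  "\<mu> \<equiv> pitilde D \<pi>"

abbreviation P\<^sub>N :: "'c \<times> (nat \<Rightarrow> int) \<Rightarrow> 'c \<times> (nat \<Rightarrow> int) \<Rightarrow> real" where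
  "P\<^sub>N \<equiv> KNR D \<alpha> p K"

abbreviation P\<^sub>R :: "'c \<Rightarrow> 'c \<Rightarrow> real" where
  "P\<^sub>R \<equiv> KR D p K"

abbreviation F :: "nat \<Rightarrow> 'c \<times> (nat \<Rightarrow> int) \<Rightarrow> 'c \<times> (nat \<Rightarrow> int) \<Rightarrow> real" where
  "F d \<equiv> Fd \<alpha> d"

abbreviation L :: "nat \<Rightarrow> 'c \<times> (nat \<Rightarrow> int) \<Rightarrow> 'c \<times> (nat \<Rightarrow> int) \<Rightarrow> real" where
  "L d \<equiv> Klift K d"

definition FLF :: "nat \<Rightarrow> 'c \<times> (nat \<Rightarrow> int) \<Rightarrow> 'c \<times> (nat \<Rightarrow> int) \<Rightarrow> real" where
  "FLF d = kcomp \<Omega> (kcomp \<Omega> (F d) (L d)) (F d)"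

definition flip_state :: "'c \<times> (nat \<Rightarrow> int) \<Rightarrow> 'c \<times> (nat \<Rightarrow> int)" where
  "flip_state x = (fst x, flip_all D (snd x))"

lemma KNR_eq: "P\<^sub>N x y = (\<Sum>d\<in>{1..D}. p (fst x) d * FLF d x y)"
  by (simp add: KNR_def FLF_def)

lemma K_skew_balance:
  "d \<in> {1..D} \<Longrightarrow> c \<noteq> c' \<Longrightarrow> v \<in> vels D \<Longrightarrow> \<pi> c * K d (v d) c c' = \<pi> c' * K d (- v d) c' c"
  using skew_bal[of d c c'] skew_bal[of d c' c] vels_pm_one[of v D d] by auto

lemma K_vel:
  assumes "v \<in> vels D" "d \<in> {1..D}"
  shows "K d (v d) c c' \<ge> 0" "(\<Sum>c'\<in>UNIV. K d (v d) c c') = 1" "(\<Sum>c'\<in>UNIV. K d (- v d) c c') = 1"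
proof -
  have "v d \<in> {1, -1}" "- v d \<in> {1, -1}"
    using vels_pm_one[OF assms] by auto
  thus "K d (v d) c c' \<ge> 0" "(\<Sum>c'\<in>UNIV. K d (v d) c c') = 1" "(\<Sum>c'\<in>UNIV. K d (- v d) c c') = 1"
    using K_nonneg K_stoch assms(2) by blast+
qed

lemma mu_nonneg: "\<mu> x \<ge> 0"
  by (simp add: pitilde_def pi_nonneg)

lemma mu_sum: "(\<Sum>x\<in>\<Omega>. \<mu> x) = 1"
  using pi_sum by (simp add: sum_lifted_space pitilde_def card_vels)

lemma flip_state_in: "x \<in> \<Omega> \<Longrightarrow> flip_state x \<in> \<Omega>"
  by (auto simp: flip_state_def flip_all_in_vels)

lemma flip_state_flip_state [simp]: "flip_state (flip_state x) = x"
  by (simp add: flip_state_def)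

lemma fst_flip_state [simp]: "fst (flip_state x) = fst x"
  by (simp add: flip_state_def)

lemma mu_flip_state [simp]: "\<mu> (flip_state x) = \<mu> x"
  by (simp add: flip_state_def pitilde_def)

lemma F_nonneg: "F d x y \<ge> 0"
  using alpha by (auto simp: Fd_def split: prod.splits)

lemma F_row_sum: "d \<in> {1..D} \<Longrightarrow> x \<in> \<Omega> \<Longrightarrow> (\<Sum>y\<in>\<Omega>. F d x y) = 1"
  using kapply_Fd[of "snd x" D d \<alpha> "\<lambda>_. 1" "fst x"] by (auto simp: kapply_def)

lemma F_skew_balance:
  assumes d: "d \<in> {1..D}" and x: "x \<in> \<Omega>" and y: "y \<in> \<Omega>"
  shows "\<mu> x * F d x y = \<mu> (flip_state y) * F d (flip_state y) (flip_state x)"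
proof -
  obtain c v c' v' where "x = (c, v)" "y = (c', v')"
    by fastforce
  moreover have "flip_all D v = flip d (flip_all D v') \<longleftrightarrow> v' = flip d v"
    by (metis flip_all_flip[OF d] flip_all_eq_iff flip_flip)
  ultimately show ?thesis
    by (auto simp: flip_state_def Fd_eq pitilde_def)
qed

lemma Klift_nonneg: "d \<in> {1..D} \<Longrightarrow> x \<in> \<Omega> \<Longrightarrow> y \<in> \<Omega> \<Longrightarrow> L d x y \<ge> 0"
  by (auto simp: Klift_eq K_vel)

lemma Klift_row_sum: "d \<in> {1..D} \<Longrightarrow> x \<in> \<Omega> \<Longrightarrow> (\<Sum>y\<in>\<Omega>. L d x y) = 1"
  using kapply_Klift[of "snd x" D d K "\<lambda>_. 1" "fst x"] by (auto simp: kapply_def K_vel)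

lemma Klift_skew_balance:
  assumes d: "d \<in> {1..D}" and x: "x \<in> \<Omega>" and y: "y \<in> \<Omega>"
  shows "\<mu> x * L d x y = \<mu> (flip_state y) * L d (flip_state y) (flip_state x)"
proof -
  obtain c v c' v' where xy: "x = (c, v)" "y = (c', v')" and v: "v \<in> vels D" "v' \<in> vels D"
    using x y by fastforce
  have flip_all_v: "flip_all D v \<in> vels D" "flip_all D v' \<in> vels D"
    using v by (auto simp: flip_all_in_vels)
  have "flip_all D v = flip d (flip_all D v') \<longleftrightarrow> v' = flip d v"
    by (metis flip_all_flip[OF d] flip_all_eq_iff flip_flip)
  moreover have "c \<noteq> c' \<Longrightarrow> \<pi> c * K d (v d) c c' = \<pi> c' * K d (- v d) c' c"
    using K_skew_balance[OF d _ v(1)] .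
  ultimately show ?thesis
    by (auto simp: xy flip_state_def Klift_eq[OF v d] Klift_eq[OF flip_all_v(2,1) d]
        flip_all_apply[OF d] pitilde_def)
qed

lemma FLF_nonneg: "d \<in> {1..D} \<Longrightarrow> x \<in> \<Omega> \<Longrightarrow> y \<in> \<Omega> \<Longrightarrow> FLF d x y \<ge> 0"
  unfolding FLF_def by (intro kcomp_nonneg F_nonneg Klift_nonneg) auto

lemma FLF_row_sum: "d \<in> {1..D} \<Longrightarrow> x \<in> \<Omega> \<Longrightarrow> (\<Sum>y\<in>\<Omega>. FLF d x y) = 1"
  unfolding FLF_def by (intro kcomp_row_sum F_row_sum Klift_row_sum) auto

lemma FLF_skew_balance:
  assumes d: "d \<in> {1..D}" and x: "x \<in> \<Omega>" and y: "y \<in> \<Omega>"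
  shows "\<mu> x * FLF d x y = \<mu> (flip_state y) * FLF d (flip_state y) (flip_state x)"
proof -
  note kcomp_skew_balance[where S=\<Omega> and \<iota>=flip_state and m=\<mu>, OF flip_state_in]
  hence "\<mu> a * kcomp \<Omega> (F d) (L d) a b
      = \<mu> (flip_state b) * kcomp \<Omega> (L d) (F d) (flip_state b) (flip_state a)"
    if "a \<in> \<Omega>" "b \<in> \<Omega>" for a b
    using F_skew_balance[OF d] Klift_skew_balance[OF d] that by simp
  hence "\<mu> x * FLF d x y
      = \<mu> (flip_state y) * kcomp \<Omega> (F d) (kcomp \<Omega> (L d) (F d)) (flip_state y) (flip_state x)"
    unfolding FLF_def
    using kcomp_skew_balance[where S=\<Omega> and \<iota>=flip_state and m=\<mu>, OF flip_state_in]
      F_skew_balance[OF d] x y by simp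
  thus ?thesis
    by (simp add: FLF_def kcomp_assoc)
qed

lemma Klift_nonzero_weight:
  assumes d: "d \<in> {1..D}" and z: "z \<in> \<Omega>" and w: "w \<in> \<Omega>" and nz: "L d z w \<noteq> 0"
  shows "p (fst z) d = p (fst w) d"
proof -
  obtain c v c' v' where zw: "z = (c, v)" "w = (c', v')" and v: "v \<in> vels D" "v' \<in> vels D"
    using z w by fastforce
  show ?thesis
  proof (cases "c = c'")
    case False
    hence "K d (v d) c c' > 0"
      using nz K_vel(1)[OF v(1) d, of c c'] by (auto simp: zw Klift_eq[OF v d] split: if_splits)
    moreover have "K d 1 c c' \<ge> 0" "K d (-1) c c' \<ge> 0"
      using K_nonneg[OF d] by auto
    ultimately have "Kavg K d c c' > 0"
      using vels_pm_one[OF v(1) d] by (auto simp: Kavg_def)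
    thus ?thesis
      using p_const[OF d] by (simp add: zw)
  qed (simp add: zw)
qed

lemma FLF_weight:
  assumes d: "d \<in> {1..D}" and x: "x \<in> \<Omega>" and y: "y \<in> \<Omega>"
  shows "p (fst x) d * FLF d x y = p (fst y) d * FLF d x y"
proof -
  have FLF: "FLF d x y = (\<Sum>z\<in>\<Omega>. \<Sum>w\<in>\<Omega>. F d x z * L d z w * F d w y)"
    unfolding FLF_def kcomp_assoc by (simp add: kcomp_def sum_distrib_left mult.assoc)
  have term_eq: "p (fst x) d * (F d x z * L d z w * F d w y) = p (fst y) d * (F d x z * L d z w * F d w y)"
    if "z \<in> \<Omega>" "w \<in> \<Omega>" for z w
    using Fd_nonzero_fst[of \<alpha> d x z] Fd_nonzero_fst[of \<alpha> d w y] Klift_nonzero_weight[OF d that]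
    by fastforce
  show ?thesis
    unfolding FLF sum_distrib_left using term_eq by (intro sum.cong refl) blast
qed

lemma KNR_nonneg: "x \<in> \<Omega> \<Longrightarrow> y \<in> \<Omega> \<Longrightarrow> P\<^sub>N x y \<ge> 0"
  unfolding KNR_eq by (intro sum_nonneg mult_nonneg_nonneg p_nonneg FLF_nonneg) auto

lemma KNR_row_sum: "x \<in> \<Omega> \<Longrightarrow> (\<Sum>y\<in>\<Omega>. P\<^sub>N x y) = 1"
  unfolding KNR_eq using p_sum
  by (subst sum.swap) (simp add: FLF_row_sum flip: sum_distrib_left)

lemma KNR_skew_balance:
  assumes x: "x \<in> \<Omega>" and y: "y \<in> \<Omega>"
  shows "\<mu> x * P\<^sub>N x y = \<mu> (flip_state y) * P\<^sub>N (flip_state y) (flip_state x)"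
proof -
  have "p (fst x) d * (\<mu> x * FLF d x y)
      = \<mu> (flip_state y) * (p (fst (flip_state y)) d * FLF d (flip_state y) (flip_state x))"
    if d: "d \<in> {1..D}" for d
  proof -
    have "p (fst x) d * (\<mu> x * FLF d x y)
        = \<mu> (flip_state y) * (p (fst (flip_state x)) d * FLF d (flip_state y) (flip_state x))"
      by (simp add: FLF_skew_balance[OF d x y] flip_state_def)
    also have "\<dots> = \<mu> (flip_state y) * (p (fst (flip_state y)) d * FLF d (flip_state y) (flip_state x))"
      by (simp only: FLF_weight[OF d flip_state_in[OF y] flip_state_in[OF x]])
    finally show ?thesis .
  qed
  thus ?thesis
    unfolding KNR_eq sum_distrib_left by (intro sum.cong) (auto simp: algebra_simps)
qed

lemma KNR_stationary: "y \<in> \<Omega> \<Longrightarrow> (\<Sum>x\<in>\<Omega>. \<mu> x * P\<^sub>N x y) = \<mu> y"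
  by (rule skew_balance_stationary[OF flip_state_in flip_state_flip_state mu_flip_state
        KNR_skew_balance KNR_row_sum])

lemma KR_nonneg: "P\<^sub>R c c' \<ge> 0"
  unfolding KR_def Kavg_def using K_nonneg p_nonneg
  by (intro sum_nonneg) (auto intro!: mult_nonneg_nonneg add_nonneg_nonneg)

lemma KR_row_sum: "(\<Sum>c'\<in>UNIV. P\<^sub>R c c') = 1"
proof -
  have "(\<Sum>c'\<in>UNIV. Kavg K d c c') = 1" if "d \<in> {1..D}" for d
    using K_stoch[OF that] by (simp add: Kavg_def sum.distrib flip: sum_divide_distrib)
  thus ?thesis
    unfolding KR_def using p_sum by (subst sum.swap) (simp flip: sum_distrib_left)
qed

lemma KR_reversible: "\<pi> c * P\<^sub>R c c' = \<pi> c' * P\<^sub>R c' c"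
proof -
  have "\<pi> c * (p c d * Kavg K d c c') = \<pi> c' * (p c' d * Kavg K d c' c)" if d: "d \<in> {1..D}" for d
  proof (cases "c = c'")
    case False
    have balance: "\<pi> c * Kavg K d c c' = \<pi> c' * Kavg K d c' c"
      using skew_bal[OF d False] skew_bal[OF d False[symmetric]] by (simp add: Kavg_def algebra_simps)
    show ?thesis
    proof (cases "Kavg K d c c' > 0")
      case True
      thus ?thesis
        using balance p_const[OF d True] by (simp add: algebra_simps)
    next
      case False
      moreover have "K d 1 c c' \<ge> 0" "K d (-1) c c' \<ge> 0"
        using K_nonneg[OF d] by auto
      ultimately have "Kavg K d c c' = 0"
        by (simp add: Kavg_def)
      thus ?thesis
        using balance by auto
    qed
  qed simp
  thus ?thesis
    unfolding KR_def sum_distrib_left by (intro sum.cong) auto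
qed

lemma KR_stationary: "(\<Sum>c\<in>UNIV. \<pi> c * P\<^sub>R c c') = \<pi> c'"
  by (rule skew_balance_stationary[where \<iota>=id and Q'=P\<^sub>R]) (simp_all add: KR_reversible KR_row_sum)

end

sublocale lifted_kernels \<subseteq> N: stationary_chain "UNIV \<times> vels D" "KNR D \<alpha> p K" "pitilde D \<pi>"
  by unfold_locales (simp_all add: KNR_nonneg KNR_row_sum KNR_stationary mu_nonneg mu_sum)

sublocale lifted_kernels \<subseteq> R: stationary_chain UNIV "KR D p K" \<pi>
  by unfold_locales (simp_all add: KR_nonneg KR_row_sum KR_stationary pi_nonneg pi_sum)

section \<open>Comparison of the asymptotic variances\<close>

context lifted_kernels
begin

abbreviation lifted :: "('c \<Rightarrow> real) \<Rightarrow> 'c \<times> (nat \<Rightarrow> int) \<Rightarrow> real" where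
  "lifted a \<equiv> \<lambda>z. a (fst z)"

definition vel_avg :: "('c \<times> (nat \<Rightarrow> int) \<Rightarrow> real) \<Rightarrow> 'c \<Rightarrow> real" where
  "vel_avg f c = (\<Sum>v\<in>vels D. f (c, v)) / 2 ^ D"

lemma kapply_KNR: "kapply \<Omega> P\<^sub>N f x = (\<Sum>d\<in>{1..D}. p (fst x) d * kapply \<Omega> (FLF d) f x)"
  unfolding KNR_eq[abs_def] by (rule kapply_mixture)

lemma kapply_FLF_lifted:
  assumes d: "d \<in> {1..D}" and v: "v \<in> vels D"
  shows "kapply \<Omega> (FLF d) (lifted a) (c, v)
           = (1 - \<alpha>) * kapply UNIV (K d (v d)) a c + \<alpha> * kapply UNIV (K d (- v d)) a c"
proof -
  have F_lifted: "kapply \<Omega> (F d) (lifted a) y = a (fst y)" if "y \<in> \<Omega>" for y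
    using that kapply_Fd[OF _ d, of "snd y" \<alpha> "lifted a" "fst y"] by (auto simp: algebra_simps)
  have LF_lifted: "kapply \<Omega> (L d) (kapply \<Omega> (F d) (lifted a)) y = kapply UNIV (K d (snd y d)) a (fst y)"
    if "y \<in> \<Omega>" for y
    using that kapply_cong[of \<Omega> "kapply \<Omega> (F d) (lifted a)" "lifted a", OF F_lifted]
      kapply_Klift[OF _ d, of "snd y" K "lifted a" "fst y"]
    by (auto simp: kapply_def)
  have "kapply \<Omega> (FLF d) (lifted a) (c, v)
      = kapply \<Omega> (F d) (kapply \<Omega> (L d) (kapply \<Omega> (F d) (lifted a))) (c, v)"
    by (simp add: FLF_def kapply_kcomp)
  also have "\<dots> = kapply \<Omega> (F d) (\<lambda>y. kapply UNIV (K d (snd y d)) a (fst y)) (c, v)"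
    by (rule kapply_cong) (simp add: LF_lifted)
  also have "\<dots> = (1 - \<alpha>) * kapply UNIV (K d (v d)) a c + \<alpha> * kapply UNIV (K d (- v d)) a c"
    by (simp add: kapply_Fd[OF v d])
  finally show ?thesis .
qed

lemma kapply_KR:
  "2 * kapply UNIV P\<^sub>R a c
     = (\<Sum>d\<in>{1..D}. p c d * (kapply UNIV (K d 1) a c + kapply UNIV (K d (-1)) a c))"
proof -
  have avg: "kapply UNIV (Kavg K d) a c = (kapply UNIV (K d 1) a c + kapply UNIV (K d (-1)) a c) / 2"
    for d
    by (simp add: kapply_def Kavg_def sum.distrib algebra_simps flip: sum_divide_distrib)
  show ?thesis
    unfolding KR_def[abs_def] kapply_mixture avg sum_distrib_left by simp
qed

text \<open>Averaging \<open>P\<^sub>N\<close> over a velocity and its reversal cancels the flip probability \<open>\<alpha>\<close>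
  and leaves the average of the forward and backward kernels.\<close>

lemma KNR_lifted_flip_state:
  assumes x: "x \<in> \<Omega>"
  shows "kapply \<Omega> P\<^sub>N (lifted a) x + kapply \<Omega> P\<^sub>N (lifted a) (flip_state x) = 2 * kapply UNIV P\<^sub>R a (fst x)"
proof -
  obtain c v where xv: "x = (c, v)" "v \<in> vels D"
    using x by auto
  have "kapply \<Omega> (FLF d) (lifted a) (c, v) + kapply \<Omega> (FLF d) (lifted a) (c, flip_all D v)
      = kapply UNIV (K d 1) a c + kapply UNIV (K d (-1)) a c" if d: "d \<in> {1..D}" for d
    using vels_pm_one[OF xv(2) d]
    by (auto simp: kapply_FLF_lifted[OF d xv(2)] kapply_FLF_lifted[OF d flip_all_in_vels[OF xv(2)]]
        flip_all_apply[OF d] algebra_simps)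
  thus ?thesis
    by (simp add: kapply_KNR kapply_KR xv flip_state_def flip: sum.distrib distrib_left)
qed

lemma N_inner_mu_lifted: "N.inner_mu (lifted a) f = R.inner_mu a (vel_avg f)"
  by (simp add: N.inner_mu_def R.inner_mu_def sum_lifted_space vel_avg_def pitilde_def
      sum_distrib_left sum_divide_distrib algebra_simps)

lemma vel_avg_lifted [simp]: "vel_avg (lifted a) = a"
  by (simp add: vel_avg_def card_vels fun_eq_iff)

lemma N_mean_lifted: "N.mean (lifted g) = R.mean g"
  by (simp add: N.mean_def R.mean_def sum_lifted_space pitilde_def card_vels)

lemma N_centered_lifted: "N.centered (lifted g) = lifted (R.centered g)"
  by (simp add: N.centered_def R.centered_def N_mean_lifted fun_eq_iff)

lemma sum_flip_state: "(\<Sum>x\<in>\<Omega>. g (flip_state x)) = (\<Sum>x\<in>\<Omega>. g x)"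
  by (rule sum.reindex_bij_witness[where i=flip_state and j=flip_state]) (auto simp: flip_state_in)

lemma N_inner_mu_flip_state:
  "N.inner_mu (\<lambda>x. f (flip_state x)) h = N.inner_mu f (\<lambda>x. h (flip_state x))"
  using sum_flip_state[of "\<lambda>x. \<mu> x * f x * h (flip_state x)"] by (simp add: N.inner_mu_def)

lemma N_inner_mu_kapply_flip_state:
  "N.inner_mu (kapply \<Omega> P\<^sub>N f) h
     = N.inner_mu (\<lambda>x. f (flip_state x)) (kapply \<Omega> P\<^sub>N (\<lambda>x. h (flip_state x)))"
proof -
  have "N.inner_mu (kapply \<Omega> P\<^sub>N f) h = (\<Sum>x\<in>\<Omega>. \<Sum>y\<in>\<Omega>. \<mu> x * P\<^sub>N x y * f y * h x)"
    by (simp add: N.inner_mu_def kapply_def sum_distrib_left sum_distrib_right algebra_simps)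
  also have "\<dots> = (\<Sum>x\<in>\<Omega>. \<Sum>y\<in>\<Omega>. \<mu> (flip_state y) * P\<^sub>N (flip_state y) (flip_state x) * f y * h x)"
    by (intro sum.cong refl) (simp add: KNR_skew_balance)
  also have "\<dots> = (\<Sum>x\<in>\<Omega>. \<Sum>y\<in>\<Omega>. \<mu> y * P\<^sub>N y (flip_state x) * f (flip_state y) * h x)"
    using sum_flip_state[of "\<lambda>y. \<mu> y * P\<^sub>N y (flip_state _) * f (flip_state y) * h _"]
    by simp
  also have "\<dots> = (\<Sum>x\<in>\<Omega>. \<Sum>y\<in>\<Omega>. \<mu> y * P\<^sub>N y x * f (flip_state y) * h (flip_state x))"
    using sum_flip_state[of "\<lambda>x. \<Sum>y\<in>\<Omega>. \<mu> y * P\<^sub>N y x * f (flip_state y) * h (flip_state x)"]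
    by simp
  also have "\<dots> = N.inner_mu (\<lambda>x. f (flip_state x)) (kapply \<Omega> P\<^sub>N (\<lambda>x. h (flip_state x)))"
    unfolding N.inner_mu_def kapply_def
    by (subst sum.swap) (simp add: sum_distrib_left algebra_simps)
  finally show ?thesis .
qed

lemma dirichlet_form_lifted: "N.dirichlet_form (lifted a) = R.dirichlet_form a"
proof -
  let ?A = "kapply \<Omega> P\<^sub>N (lifted a)"
  have "N.inner_mu (lifted a) ?A = N.inner_mu (lifted a) (\<lambda>x. ?A (flip_state x))"
    using N_inner_mu_flip_state[of "lifted a" ?A] by (simp add: flip_state_def)
  also have "\<dots> = N.inner_mu (lifted a) (\<lambda>x. 2 * kapply UNIV P\<^sub>R a (fst x) - ?A x)"
    using KNR_lifted_flip_state by (intro N.inner_mu_cong) (auto simp: algebra_simps)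
  also have "\<dots> = 2 * R.inner_mu a (kapply UNIV P\<^sub>R a) - N.inner_mu (lifted a) ?A"
    using N_inner_mu_lifted[of a "lifted (\<lambda>c. 2 * kapply UNIV P\<^sub>R a c)"]
      vel_avg_lifted[of "\<lambda>c. 2 * kapply UNIV P\<^sub>R a c"]
    by (simp add: N.inner_mu_diff_right R.inner_mu_def sum_distrib_left algebra_simps)
  finally have "N.inner_mu (lifted a) ?A = R.inner_mu a (kapply UNIV P\<^sub>R a)"
    by simp
  thus ?thesis
    by (simp add: N.dirichlet_form_def R.dirichlet_form_def N_inner_mu_lifted)
qed

lemma KNR_cross_terms_vanish:
  assumes "vel_avg b = (\<lambda>_. 0)"
  shows "N.inner_mu (lifted a) (kapply \<Omega> P\<^sub>N b) + N.inner_mu b (kapply \<Omega> P\<^sub>N (lifted a)) = 0"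
proof -
  let ?A = "kapply \<Omega> P\<^sub>N (lifted a)"
  have "N.inner_mu (lifted a) (kapply \<Omega> P\<^sub>N b)
      = N.inner_mu (\<lambda>x. b (flip_state x)) (kapply \<Omega> P\<^sub>N (\<lambda>x. a (fst (flip_state x))))"
    by (simp add: N.inner_mu_commute[of "lifted a"] N_inner_mu_kapply_flip_state)
  also have "\<dots> = N.inner_mu b (\<lambda>x. ?A (flip_state x))"
    by (simp add: N_inner_mu_flip_state)
  also have "\<dots> = N.inner_mu b (\<lambda>x. 2 * kapply UNIV P\<^sub>R a (fst x) - ?A x)"
    using KNR_lifted_flip_state by (intro N.inner_mu_cong) (auto simp: algebra_simps)
  also have "\<dots> = - N.inner_mu b ?A"
    using N_inner_mu_lifted[of "\<lambda>c. 2 * kapply UNIV P\<^sub>R a c" b] assms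
    by (simp add: N.inner_mu_diff_right N.inner_mu_commute[of b] R.inner_mu_def)
  finally show ?thesis
    by simp
qed

lemma dirichlet_form_vel_avg_le: "R.dirichlet_form (vel_avg u) \<le> N.dirichlet_form u"
proof -
  define b where "b x = u x - vel_avg u (fst x)" for x
  have u: "u = (\<lambda>x. lifted (vel_avg u) x + b x)"
    by (simp add: b_def)
  have b: "vel_avg b = (\<lambda>_. 0)"
    by (simp add: fun_eq_iff vel_avg_def b_def sum_subtractf card_vels)
  have "N.dirichlet_form u = R.dirichlet_form (vel_avg u) + N.dirichlet_form b"
    using KNR_cross_terms_vanish[OF b, of "vel_avg u"]
    by (subst u) (simp add: N.dirichlet_form_add dirichlet_form_lifted N_inner_mu_lifted b
        R.inner_mu_def)
  thus ?thesis
    using N.dirichlet_form_nonneg[of b] by simp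
qed

lemma vel_avg_harmonic:
  assumes harm: "\<And>x. x \<in> \<Omega> \<Longrightarrow> kapply \<Omega> P\<^sub>N c x = c x"
  shows "R.inner_mu a (kapply UNIV P\<^sub>R (vel_avg c)) = R.inner_mu a (vel_avg c)"
proof -
  let ?A = "kapply \<Omega> P\<^sub>N (lifted a)"
  have "N.inner_mu (\<lambda>x. ?A (flip_state x)) c = N.inner_mu (lifted a) c"
    using N_inner_mu_flip_state[of ?A c] N_inner_mu_kapply_flip_state[of "lifted a"]
      N.inner_mu_cong[OF _ harm]
    by (simp add: flip_state_def)
  moreover have "N.inner_mu ?A c = N.inner_mu (lifted a) c"
    by (rule N.inner_mu_kapply_harmonic[OF harm])
  moreover have "2 * R.inner_mu (kapply UNIV P\<^sub>R a) (vel_avg c)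
      = N.inner_mu (\<lambda>x. ?A x + ?A (flip_state x)) c"
    using KNR_lifted_flip_state
    by (simp add: N_inner_mu_lifted[symmetric] N.inner_mu_def sum_distrib_left algebra_simps)
  ultimately have "R.inner_mu (kapply UNIV P\<^sub>R a) (vel_avg c) = R.inner_mu a (vel_avg c)"
    by (simp add: N.inner_mu_add_left N_inner_mu_lifted)
  thus ?thesis
    by (simp add: R.inner_mu_kapply_reversible KR_reversible)
qed

lemma lifted_harmonic_part_null:
  assumes decR: "\<And>c. f c = h c - kapply UNIV P\<^sub>R h c + c\<^sub>R c" and nullR: "R.inner_mu c\<^sub>R c\<^sub>R = 0"
    and decN: "\<And>x. x \<in> \<Omega> \<Longrightarrow> lifted f x = u x - kapply \<Omega> P\<^sub>N u x + c\<^sub>N x"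
    and harmN: "\<And>x. x \<in> \<Omega> \<Longrightarrow> kapply \<Omega> P\<^sub>N c\<^sub>N x = c\<^sub>N x"
  shows "N.inner_mu c\<^sub>N c\<^sub>N = 0"
proof -
  have "N.inner_mu c\<^sub>N c\<^sub>N = N.inner_mu (lifted f) c\<^sub>N"
    by (rule N.inner_mu_poisson_harmonic[OF decN harmN, symmetric])
  also have "\<dots> = R.inner_mu h (vel_avg c\<^sub>N) - R.inner_mu (kapply UNIV P\<^sub>R h) (vel_avg c\<^sub>N)"
    using R.inner_mu_poisson_null[OF decR nullR] by (simp add: N_inner_mu_lifted)
  also have "\<dots> = 0"
    using vel_avg_harmonic[OF harmN, of h]
    by (simp add: R.inner_mu_kapply_reversible KR_reversible)
  finally show ?thesis .
qed

lemma lifted_poisson_le: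
  assumes decR: "\<And>c. f c = h c - kapply UNIV P\<^sub>R h c + c\<^sub>R c" and nullR: "R.inner_mu c\<^sub>R c\<^sub>R = 0"
    and decN: "\<And>x. x \<in> \<Omega> \<Longrightarrow> lifted f x = u x - kapply \<Omega> P\<^sub>N u x + c\<^sub>N x"
    and nullN: "N.inner_mu c\<^sub>N c\<^sub>N = 0"
  shows "N.inner_mu (lifted f) u \<le> R.inner_mu f h"
proof -
  have "N.inner_mu (lifted f) u = 2 * N.inner_mu (lifted f) u - N.dirichlet_form u"
    using N.dirichlet_form_poisson_null[OF decN nullN] by simp
  also have "\<dots> \<le> 2 * R.inner_mu f (vel_avg u) - R.dirichlet_form (vel_avg u)"
    using dirichlet_form_vel_avg_le[of u] by (simp add: N_inner_mu_lifted)
  also have "\<dots> \<le> R.inner_mu f h"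
    by (rule R.reversible_poisson_variational[OF KR_reversible decR nullR])
  finally show ?thesis .
qed

theorem asym_var_KNR_le_KR:
  "asym_var \<Omega> \<mu> P\<^sub>N (lifted g) \<le> asym_var UNIV \<pi> P\<^sub>R g"
proof -
  obtain h c\<^sub>R where decR: "\<And>c. R.centered g c = h c - kapply UNIV P\<^sub>R h c + c\<^sub>R c"
    and harmR: "\<And>c. kapply UNIV P\<^sub>R c\<^sub>R c = c\<^sub>R c"
    using R.poisson_decomposition[of "R.centered g"] by (metis UNIV_I)
  obtain u c\<^sub>N where decN: "\<And>x. x \<in> \<Omega> \<Longrightarrow> lifted (R.centered g) x = u x - kapply \<Omega> P\<^sub>N u x + c\<^sub>N x"
    and harmN: "\<And>x. x \<in> \<Omega> \<Longrightarrow> kapply \<Omega> P\<^sub>N c\<^sub>N x = c\<^sub>N x"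
    using N.poisson_decomposition[of "lifted (R.centered g)"] by metis
  note asym_var_N = N.asym_var_poisson[of "lifted g", unfolded N_centered_lifted, OF decN harmN]
  note asym_var_R = R.asym_var_poisson[OF decR harmR]
  show ?thesis
  proof (cases "R.inner_mu c\<^sub>R c\<^sub>R = 0")
    case True
    have "N.inner_mu c\<^sub>N c\<^sub>N = 0"
      by (rule lifted_harmonic_part_null[OF decR True decN harmN])
    moreover have "N.inner_mu (lifted (R.centered g)) u \<le> R.inner_mu (R.centered g) h"
      by (rule lifted_poisson_le[OF decR True decN \<open>N.inner_mu c\<^sub>N c\<^sub>N = 0\<close>])
    ultimately show ?thesis
      using asym_var_N asym_var_R True by (simp add: N_inner_mu_lifted)
  next
    case False
    show ?thesis
      unfolding asym_var_R if_not_P[OF False] by simp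
  qed
qed

end

theorem mainTheorem9:
  fixes \<pi> :: "'c::finite \<Rightarrow> real"
    and D :: nat and \<alpha> :: real
    and K :: "nat \<Rightarrow> int \<Rightarrow> 'c \<Rightarrow> 'c \<Rightarrow> real"
    and p :: "'c \<Rightarrow> nat \<Rightarrow> real"
  assumes pi_nonneg: "\<And>c. \<pi> c \<ge> 0"
    and pi_sum: "(\<Sum>c\<in>UNIV. \<pi> c) = 1"
    and alpha: "0 \<le> \<alpha>" "\<alpha> \<le> 1"
    and K_nonneg: "\<And>d s c c'. d \<in> {1..D} \<Longrightarrow> s \<in> {1, -1} \<Longrightarrow> K d s c c' \<ge> 0"
    and K_stoch: "\<And>d s c. d \<in> {1..D} \<Longrightarrow> s \<in> {1, -1} \<Longrightarrow> (\<Sum>c'\<in>UNIV. K d s c c') = 1"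
    and skew_bal: "\<And>d c c'. d \<in> {1..D} \<Longrightarrow> c \<noteq> c' \<Longrightarrow>
                      \<pi> c * K d 1 c c' = \<pi> c' * K d (-1) c' c"
    and p_nonneg: "\<And>c d. d \<in> {1..D} \<Longrightarrow> p c d \<ge> 0"
    and p_sum: "\<And>c. (\<Sum>d\<in>{1..D}. p c d) = 1"
    and p_const: "\<And>d c c'. d \<in> {1..D} \<Longrightarrow> Kavg K d c c' > 0 \<Longrightarrow> p c d = p c' d"
  shows "(\<forall>c c'. \<pi> c * KR D p K c c' = \<pi> c' * KR D p K c' c)
       \<and> (\<forall>y\<in>UNIV \<times> vels D.
            (\<Sum>x\<in>UNIV \<times> vels D. pitilde D \<pi> x * KNR D \<alpha> p K x y) = pitilde D \<pi> y)
       \<and> (\<forall>gt :: 'c \<Rightarrow> real.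
            asym_var (UNIV \<times> vels D) (pitilde D \<pi>) (KNR D \<alpha> p K) (\<lambda>x. gt (fst x))
              \<le> asym_var UNIV \<pi> (KR D p K) gt)"
proof -
  interpret lifted_kernels \<pi> D \<alpha> K p
    by unfold_locales (fact assms)+
  show ?thesis
    by (intro conjI allI ballI KR_reversible asym_var_KNR_le_KR, rule KNR_stationary)
qed

end
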